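(* Assume (A1), (A2'), and $\alpha\ge\frac12\max\{0,\max_{j\in\Gamma_h}(V(x_j)+\omega)\}+\frac12$. For fixed $h$, let $u_h^*$ be a discrete ground state satisfying the discrete non-degeneracy condition (NDh). Then there exists $\delta_0>0$ such that for every initial datum $u_h^0\in U_{h,\delta_0}(u_h^* )\cap\mathcal S_{h,p+1}$ and every $\tau>0$, the fully discrete GFALM iterates satisfy $$\|u_h^n-u_h^*\|_{1,h}\le Ce^{-an\tau/(1+\tau)}\qquad\forall n\in\mathbb N,$$ with constants $C,a>0$ independent of $n$ and $\tau$.
   Context: Fully discrete setting ($d=1$), real-valued grid functions. $\Omega=[x_0,x_0+L]$, $M>0$ even, $h=L/M$, grid $x_j=x_0+jh$, $j\in\Gamma_h=\{0,\dots,M-1\}$, periodic; $X_h=\mathbb R^M$. $\varphi_j(x)=\frac1M\sum_{l=-M/2}^{M/2}\frac1{a_l}e^{\mathrm il\sigma(x-x_j)}$, $a_l=1$ ($|l|<M/2$), $a_l=2$ ($|l|=M/2$), $\sigma=2\pi/L$; $(\mathbf D_{xx})_{j,l}=\varphi_l''(x_j)$. $\langle u_h,v_h\rangle_h=h\sum_ju_jv_j$, $\|u_h\|_h^2=\langle u_h,u_h\rangle_h$, $|u_h|_{1,h}^2=\langle-\mathbf D_{xx}u_h,u_h\rangle_h$, $\|u_h\|_{1,h}^2=\|u_h\|_h^2+|u_h|_{1,h}^2$, $\|u_h\|_{h,q}=(h\sum_j|u_j|^q)^{1/q}$. $V_j=V(x_j)$; $Q_h(u_h)=\frac12|u_h|_{1,h}^2+h\sum_jV_j|u_j|^2+\omega\|u_h\|_h^2$;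 $(\mathcal A_hu_h)_j=-\frac12(\mathbf D_{xx}u_h)_j+(V_j+\omega)u_j$. $\mathcal S_{h,p+1}=\{u_h:\|u_h\|_{h,p+1}=1\}$; $\widetilde\lambda_h(u_h)=Q_h(u_h)/\|u_h\|_{h,p+1}^{p+1}$. (A1): $1<p<\infty$, $V\ge0$ bounded. $\lambda_0':=\inf\{\frac12|u_h|_{1,h}^2+h\sum_jV_j|u_j|^2:\|u_h\|_h=1\}$; (A2'): $\omega>-\lambda_0'$. A discrete ground state is $u_h^*\in\arg\min\{Q_h:u_h\in\mathcal S_{h,p+1}\}$ with $(\mathcal A_hu_h^* )_j=\lambda^*|u_j^*|^{p-1}u_j^*$. $\mathcal T_{u_h^*,h}=\{\xi_h:\langle|u_h^*|^{p-1}u_h^*,\xi_h\rangle_h=0\}$. (NDh): there is $c>0$ with $\langle\mathcal A_h\xi_h,\xi_h\rangle_h-p\lambda^*\langle|u_h^*|^{p-1}\xi_h,\xi_h\rangle_h\ge c\|\xi_h\|_{1,h}^2$ for all $\xi_h\in\mathcal T_{u_h^*,h}$. $U_{h,\delta}(u_h^* )=\{u_h:\|u_h-u_h^*\|_{1,h}\le\delta\}$. Fully discrete GFALM: for $j\in\Gamma_h$, $\frac1\tau(\widetilde u_j^{n+1}-u_j^n)=-\widetilde\mu_j^{n+1}$, $\widetilde\mu_j^{n+1}=-\frac12(\mathbf D_{xx}\widetilde u_h^{n+1})_j+(V_j+\omega-\widetilde\lambda_h(u_h^n)|u_j^n|^{p-1})u_j^n+\alpha(\widetilde u_j^{n+1}-u_j^n)$,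 and $u_j^{n+1}=\widetilde u_j^{n+1}/\|\widetilde u_h^{n+1}\|_{h,p+1}$. *)

theory Defs
  imports "HOL-Analysis.Analysis"
begin

text \<open>Grid functions are
 real functions on nat; only the values at indices j < M (the grid Gamma_h) matter.
 Parameters: x0 (left endpoint), L (length), M (number of grid points).\<close>

definition hstep :: "real \<Rightarrow> nat \<Rightarrow> real" where
  "hstep L M = L / real M"

definition xgrid :: "real \<Rightarrow> real \<Rightarrow> nat \<Rightarrow> nat \<Rightarrow> real" where
  "xgrid x0 L M j = x0 + real j * hstep L M"

definition sigma :: "real \<Rightarrow> real" where
  "sigma L = 2 * pi / L"

definition acoef :: "nat \<Rightarrow> int \<Rightarrow> real" where
  "acoef M l = (if \<bar>l\<bar> = int M div 2 then 2 else 1)"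

definition phi :: "real \<Rightarrow> real \<Rightarrow> nat \<Rightarrow> nat \<Rightarrow> real \<Rightarrow> complex" where
  "phi x0 L M j x = (1 / of_nat M) *
     (\<Sum>l\<in>{-(int M div 2)..int M div 2}.
        of_real (1 / acoef M l) * exp (\<i> * of_real (real_of_int l * sigma L * (x - xgrid x0 L M j))))"

text \<open>(D_xx)_{j,l} = phi_l''(x_j).  This value is real; we take the real part.\<close>
definition Dxx :: "real \<Rightarrow> real \<Rightarrow> nat \<Rightarrow> nat \<Rightarrow> nat \<Rightarrow> real" where
  "Dxx x0 L M j l = Re (vector_derivative
      (\<lambda>y. vector_derivative (phi x0 L M l) (at y)) (at (xgrid x0 L M j)))"

definition Dxx_app :: "real \<Rightarrow> real \<Rightarrow> nat \<Rightarrow> (nat \<Rightarrow> real) \<Rightarrow> nat \<Rightarrow> real" where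
  "Dxx_app x0 L M u j = (\<Sum>l<M. Dxx x0 L M j l * u l)"

definition inner_h :: "real \<Rightarrow> nat \<Rightarrow> (nat \<Rightarrow> real) \<Rightarrow> (nat \<Rightarrow> real) \<Rightarrow> real" where
  "inner_h L M u v = hstep L M * (\<Sum>j<M. u j * v j)"

definition norm_h :: "real \<Rightarrow> nat \<Rightarrow> (nat \<Rightarrow> real) \<Rightarrow> real" where
  "norm_h L M u = sqrt (inner_h L M u u)"

definition semi1_h :: "real \<Rightarrow> real \<Rightarrow> nat \<Rightarrow> (nat \<Rightarrow> real) \<Rightarrow> real" where
  "semi1_h x0 L M u = sqrt (inner_h L M (\<lambda>j. - Dxx_app x0 L M u j) u)"

definition norm1_h :: "real \<Rightarrow> real \<Rightarrow> nat \<Rightarrow> (nat \<Rightarrow> real) \<Rightarrow> real" where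
  "norm1_h x0 L M u = sqrt ((norm_h L M u)\<^sup>2 + (semi1_h x0 L M u)\<^sup>2)"

definition normq_h :: "real \<Rightarrow> nat \<Rightarrow> real \<Rightarrow> (nat \<Rightarrow> real) \<Rightarrow> real" where
  "normq_h L M q u = (hstep L M * (\<Sum>j<M. \<bar>u j\<bar> powr q)) powr (1 / q)"

definition Q_h :: "real \<Rightarrow> real \<Rightarrow> nat \<Rightarrow> (real \<Rightarrow> real) \<Rightarrow> real \<Rightarrow> (nat \<Rightarrow> real) \<Rightarrow> real" where
  "Q_h x0 L M V \<omega> u = 1/2 * (semi1_h x0 L M u)\<^sup>2
      + hstep L M * (\<Sum>j<M. V (xgrid x0 L M j) * \<bar>u j\<bar>\<^sup>2) + \<omega> * (norm_h L M u)\<^sup>2"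

definition A_h :: "real \<Rightarrow> real \<Rightarrow> nat \<Rightarrow> (real \<Rightarrow> real) \<Rightarrow> real \<Rightarrow> (nat \<Rightarrow> real) \<Rightarrow> nat \<Rightarrow> real" where
  "A_h x0 L M V \<omega> u j = - 1/2 * Dxx_app x0 L M u j + (V (xgrid x0 L M j) + \<omega>) * u j"

definition S_h :: "real \<Rightarrow> nat \<Rightarrow> real \<Rightarrow> (nat \<Rightarrow> real) set" where
  "S_h L M p = {u. normq_h L M (p + 1) u = 1}"

definition lam_tilde :: "real \<Rightarrow> real \<Rightarrow> nat \<Rightarrow> (real \<Rightarrow> real) \<Rightarrow> real \<Rightarrow> real \<Rightarrow> (nat \<Rightarrow> real) \<Rightarrow> real" where
  "lam_tilde x0 L M V \<omega> p u = Q_h x0 L M V \<omega> u / (normq_h L M (p + 1) u) powr (p + 1)"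

definition lam0' :: "real \<Rightarrow> real \<Rightarrow> nat \<Rightarrow> (real \<Rightarrow> real) \<Rightarrow> real" where
  "lam0' x0 L M V = Inf {1/2 * (semi1_h x0 L M u)\<^sup>2
      + hstep L M * (\<Sum>j<M. V (xgrid x0 L M j) * \<bar>u j\<bar>\<^sup>2) | u. norm_h L M u = 1}"

definition discrete_ground_state ::
  "real \<Rightarrow> real \<Rightarrow> nat \<Rightarrow> (real \<Rightarrow> real) \<Rightarrow> real \<Rightarrow> real \<Rightarrow> (nat \<Rightarrow> real) \<Rightarrow> real \<Rightarrow> bool" where
  "discrete_ground_state x0 L M V \<omega> p us lam \<longleftrightarrow>
     us \<in> S_h L M p \<and> (\<forall>v\<in>S_h L M p. Q_h x0 L M V \<omega> us \<le> Q_h x0 L M V \<omega> v) \<and>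
     (\<forall>j<M. A_h x0 L M V \<omega> us j = lam * \<bar>us j\<bar> powr (p - 1) * us j)"

definition tangent_h :: "real \<Rightarrow> nat \<Rightarrow> real \<Rightarrow> (nat \<Rightarrow> real) \<Rightarrow> (nat \<Rightarrow> real) set" where
  "tangent_h L M p us = {\<xi>. inner_h L M (\<lambda>j. \<bar>us j\<bar> powr (p - 1) * us j) \<xi> = 0}"

definition NDh :: "real \<Rightarrow> real \<Rightarrow> nat \<Rightarrow> (real \<Rightarrow> real) \<Rightarrow> real \<Rightarrow> real \<Rightarrow> (nat \<Rightarrow> real) \<Rightarrow> real \<Rightarrow> bool" where
  "NDh x0 L M V \<omega> p us lam \<longleftrightarrow> (\<exists>c>0. \<forall>\<xi>\<in>tangent_h L M p us.
      inner_h L M (A_h x0 L M V \<omega> \<xi>) \<xi>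
        - p * lam * inner_h L M (\<lambda>j. \<bar>us j\<bar> powr (p - 1) * \<xi> j) \<xi>
      \<ge> c * (norm1_h x0 L M \<xi>)\<^sup>2)"

definition U_h :: "real \<Rightarrow> real \<Rightarrow> nat \<Rightarrow> real \<Rightarrow> (nat \<Rightarrow> real) \<Rightarrow> (nat \<Rightarrow> real) set" where
  "U_h x0 L M \<delta> us = {u. norm1_h x0 L M (\<lambda>j. u j - us j) \<le> \<delta>}"

text \<open>u, ut: sequences of grid functions; ut (Suc n) is the intermediate tilde-u^{n+1}.\<close>
definition GFALM_iter ::
  "real \<Rightarrow> real \<Rightarrow> nat \<Rightarrow> (real \<Rightarrow> real) \<Rightarrow> real \<Rightarrow> real \<Rightarrow> real \<Rightarrow> real
     \<Rightarrow> (nat \<Rightarrow> nat \<Rightarrow> real) \<Rightarrow> (nat \<Rightarrow> nat \<Rightarrow> real) \<Rightarrow> bool" where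
  "GFALM_iter x0 L M V \<omega> p \<alpha> \<tau> u ut \<longleftrightarrow>
     (\<forall>n. \<forall>j<M.
        (ut (Suc n) j - u n j) / \<tau> =
          - ( - 1/2 * Dxx_app x0 L M (ut (Suc n)) j
              + (V (xgrid x0 L M j) + \<omega> - lam_tilde x0 L M V \<omega> p (u n) * \<bar>u n j\<bar> powr (p - 1)) * u n j
              + \<alpha> * (ut (Suc n) j - u n j))
      \<and> u (Suc n) j = ut (Suc n) j / normq_h L M (p + 1) (ut (Suc n)))"

end

theory Submission
  imports Defs "HOL-Library.Landau_Symbols"
begin

(*
  Near a non-degenerate ground state u* the iteration is controlled by the Lyapunov functional
  E(u) = <H xi, xi>, where H = A - p lam |u*|^(p-1) is the Hessian of the energy at u*,
  w = |u*|^(p-1) u* is the normal of the constraint, and xi = u - h <w,u> u* is the projection of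
  u onto the tangent space {<w, .> = 0}.  By (NDh), E(u) is comparable to |u - u*|^2 on the
  constraint manifold.

  One step first solves (1/tau + alpha + K) d = grad u, where the gradient equals H xi up to
  o(|u - u*|).  Since alpha dominates (V + omega)/2 + 1/2, comparing the energies of xi and of
  xi - (projected d) shows that this linear step decreases E by the factor 1 - kappa tau/(1+tau),
  uniformly in tau.  Renormalisation onto the constraint changes E only by a relative error
  O(|d|) = O(tau/(1+tau) |u - u*|), which for u close to u* costs at most half of the gain.  Hence
  E(u_n) <= (1 - kappa tau/(2 (1+tau)))^n E(u_0) along the whole trajectory, and on the fixed
  grid the discrete H^1 norm is equivalent to the Euclidean one.
*)

section \<open>Real functions of one variable\<close>

lemma abs_powr_add_one_eq: "\<bar>x\<bar> powr (p + 1) = (\<bar>x\<bar> powr (p - 1) * x) * x"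
  for x p :: real
proof (cases "x = 0")
  case False
  have "\<bar>x\<bar> powr (p + 1) = \<bar>x\<bar> powr ((p - 1) + 2)"
    by (rule arg_cong[where f = "\<lambda>e. \<bar>x\<bar> powr e"]) simp
  also have "\<dots> = \<bar>x\<bar> powr (p - 1) * \<bar>x\<bar> powr 2"
    by (rule powr_add)
  also have "\<bar>x\<bar> powr 2 = x * x"
    using False by (simp add: power2_eq_square)
  finally show ?thesis
    by simp
qed simp

lemma abs_signed_powr: "\<bar>\<bar>x\<bar> powr (p - 1) * x\<bar> = \<bar>x\<bar> powr p"
  for x p :: real
proof (cases "x = 0")
  case False
  have "\<bar>x\<bar> powr p = \<bar>x\<bar> powr ((p - 1) + 1)"
    by (rule arg_cong[where f = "\<lambda>e. \<bar>x\<bar> powr e"]) simp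
  with False show ?thesis
    unfolding powr_add
    by (simp add: abs_mult)
qed simp

lemma signed_powr_has_real_derivative:
  fixes p x :: real
  assumes "1 < p"
  shows "((\<lambda>y. \<bar>y\<bar> powr (p - 1) * y) has_real_derivative p * \<bar>x\<bar> powr (p - 1)) (at x)"
proof (cases x "0 :: real" rule: linorder_cases)
  case greater
  have "((\<lambda>y. y powr p) has_real_derivative p * \<bar>x\<bar> powr (p - 1)) (at x)"
    using has_real_derivative_powr[OF greater] greater by simp
  then show ?thesis
  proof (rule has_field_derivative_transform_within_open[where S = "{0<..}"])
    show "y powr p = \<bar>y\<bar> powr (p - 1) * y" if "y \<in> {0<..}" for y
      using that powr_mult_base[of y "p - 1"] by (simp add: mult.commute)
  qed (use greater in auto)
next
  case less
  have "((\<lambda>y. y powr p) has_real_derivative p * (- x) powr (p - 1)) (at (- x))"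
    using less by (intro has_real_derivative_powr) simp
  from DERIV_chain2[OF this DERIV_minus[OF DERIV_ident]]
  have "((\<lambda>y. (- y) powr p) has_real_derivative - (p * \<bar>x\<bar> powr (p - 1))) (at x)"
    using less by simp
  from DERIV_minus[OF this]
  have "((\<lambda>y. - ((- y) powr p)) has_real_derivative p * \<bar>x\<bar> powr (p - 1)) (at x)"
    by simp
  then show ?thesis
  proof (rule has_field_derivative_transform_within_open[where S = "{..<0}"])
    show "- ((- y) powr p) = \<bar>y\<bar> powr (p - 1) * y" if "y \<in> {..<0}" for y
      using that powr_mult_base[of "- y" "p - 1"] by (simp add: mult.commute)
  qed (use less in auto)
next
  case equal
  have "((\<lambda>y. \<bar>y\<bar> powr (p - 1)) \<longlongrightarrow> 0) (at 0)"
    using assms by (intro tendsto_zero_powrI) (auto intro!: tendsto_eq_intros)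
  then have "((\<lambda>y. (\<bar>y\<bar> powr (p - 1) * y - \<bar>0\<bar> powr (p - 1) * 0) / (y - 0)) \<longlongrightarrow> 0) (at 0)"
    by (rule Lim_transform_eventually) (auto simp: eventually_at_filter)
  with equal assms show ?thesis
    by (simp add: has_field_derivative_iff)
qed

lemma abs_powr_add_one_has_real_derivative:
  fixes p x :: real
  assumes "1 < p"
  shows "((\<lambda>y. \<bar>y\<bar> powr (p + 1)) has_real_derivative (p + 1) * (\<bar>x\<bar> powr (p - 1) * x)) (at x)"
proof -
  have "((\<lambda>y. (\<bar>y\<bar> powr (p - 1) * y) * y) has_real_derivative (p + 1) * (\<bar>x\<bar> powr (p - 1) * x)) (at x)"
    using DERIV_mult[OF signed_powr_has_real_derivative[OF assms, of x] DERIV_ident]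
    by (simp add: algebra_simps)
  then show ?thesis
    by (simp only: abs_powr_add_one_eq)
qed

lemma abs_powr_add_one_lipschitz:
  fixes p a b R :: real
  assumes "1 < p" and "\<bar>a\<bar> \<le> R" and "\<bar>b\<bar> \<le> R"
  shows "\<bar>\<bar>a\<bar> powr (p + 1) - \<bar>b\<bar> powr (p + 1)\<bar> \<le> (p + 1) * R powr p * \<bar>a - b\<bar>"
proof -
  have ordered: "\<bar>\<bar>y\<bar> powr (p + 1) - \<bar>x\<bar> powr (p + 1)\<bar> \<le> (p + 1) * R powr p * (y - x)"
    if "x < y" "\<bar>x\<bar> \<le> R" "\<bar>y\<bar> \<le> R" for x y :: real
  proof -
    obtain z where z: "x < z" "z < y"
      and mvt: "\<bar>y\<bar> powr (p + 1) - \<bar>x\<bar> powr (p + 1) = (y - x) * ((p + 1) * (\<bar>z\<bar> powr (p - 1) * z))"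
      using MVT2[OF \<open>x < y\<close> abs_powr_add_one_has_real_derivative[OF assms(1)]] by blast
    have "\<bar>(p + 1) * (\<bar>z\<bar> powr (p - 1) * z)\<bar> = (p + 1) * \<bar>z\<bar> powr p"
      using abs_signed_powr[of z p] assms(1) by (simp add: abs_mult)
    also have "\<dots> \<le> (p + 1) * R powr p"
      using z that assms(1) by (intro mult_left_mono powr_mono2) auto
    finally show ?thesis
      unfolding mvt abs_mult using that by (simp add: mult.commute mult_left_mono)
  qed
  show ?thesis
    using ordered[of a b] ordered[of b a] assms(2,3)
    by (cases a b rule: linorder_cases) (simp_all add: abs_minus_commute)
qed

lemma eventually_derivative_remainder_le:
  fixes f :: "real \<Rightarrow> real"
  assumes "(f has_real_derivative D) (at x)" and "0 < e"
  shows "eventually (\<lambda>y. \<bar>f y - f x - D * (y - x)\<bar> \<le> e * \<bar>y - x\<bar>) (nhds x)"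
proof -
  obtain d where "0 < d" and d: "\<And>y. norm (y - x) < d \<Longrightarrow> norm (f y - f x - D * (y - x)) \<le> e * norm (y - x)"
    using assms unfolding has_field_derivative_def has_derivative_at_alt by blast
  then show ?thesis
    unfolding eventually_nhds_metric dist_real_def by auto
qed

lemma powr_inverse_near_one:
  fixes Q q \<delta> :: real
  assumes "1 \<le> q" and "\<delta> \<le> 1/2" and "\<bar>Q - 1\<bar> \<le> \<delta>"
  shows "1 - \<delta> \<le> Q powr (1/q)" and "Q powr (1/q) \<le> 1 + \<delta>"
proof -
  have "0 < Q" using assms by linarith
  have "1 - \<delta> \<le> Q powr (1/q) \<and> Q powr (1/q) \<le> 1 + \<delta>"
  proof (cases "Q \<le> 1")
    case True
    have "Q powr 1 \<le> Q powr (1/q)"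
      using assms(1) \<open>0 < Q\<close> True by (intro powr_mono') auto
    moreover have "Q powr (1/q) \<le> 1"
      using assms(1) \<open>0 < Q\<close> True by (intro powr_le1) auto
    ultimately show ?thesis
      using assms(3) \<open>0 < Q\<close> by auto
  next
    case False
    have "Q powr (1/q) \<le> Q powr 1"
      using assms(1) False by (intro powr_mono) auto
    moreover have "1 \<le> Q powr (1/q)"
      using assms(1) False by (intro ge_one_powr_ge_zero) auto
    ultimately show ?thesis
      using assms(3) \<open>0 < Q\<close> by auto
  qed
  then show "1 - \<delta> \<le> Q powr (1/q)" and "Q powr (1/q) \<le> 1 + \<delta>" by auto
qed

lemma eq_1_if_powr_eq_1:
  fixes x r :: real
  assumes "0 \<le> x" and "r \<noteq> 0" and "x powr r = 1"
  shows "x = 1"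
proof -
  have "x \<noteq> 0" using assms by auto
  have "(x powr r) powr (1 / r) = x powr (r * (1 / r))"
    by (rule powr_powr)
  also have "\<dots> = x"
    using assms \<open>x \<noteq> 0\<close> by simp
  finally show ?thesis
    using assms(3) by simp
qed

lemma decay_factor_absorbs_defect:
  fixes K \<delta> :: real
  assumes "0 \<le> \<delta>" and "\<delta> \<le> K / 4" and "K \<le> 2"
  shows "1 - K \<le> (1 - K / 2) * (1 - \<delta>)\<^sup>2"
proof -
  have "1 - K \<le> (1 - K / 2) * (1 - K / 2)"
    using zero_le_square[of K] by (simp add: algebra_simps)
  also have "\<dots> \<le> (1 - K / 2) * (1 - 2 * \<delta>)"
    using assms by (intro mult_left_mono) auto
  also have "\<dots> \<le> (1 - K / 2) * (1 - \<delta>)\<^sup>2"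
    using assms zero_le_square[of \<delta>] by (intro mult_left_mono) (auto simp: power2_eq_square algebra_simps)
  finally show ?thesis .
qed

lemma decay_after_normalization:
  fixes a b x K \<delta> :: real
  assumes "0 \<le> a" and "b \<le> (1 - K) * a" and "x \<le> b / (1 - \<delta>)\<^sup>2"
    and "0 \<le> \<delta>" and "\<delta> \<le> K / 4" and "K \<le> 2" and "\<delta> < 1"
  shows "x \<le> (1 - K / 2) * a"
proof -
  have "0 < (1 - \<delta>)\<^sup>2"
    using assms(7) by simp
  have "b \<le> (1 - K / 2) * (1 - \<delta>)\<^sup>2 * a"
    using assms(2) mult_right_mono[OF decay_factor_absorbs_defect[OF assms(4,5,6)] assms(1)] by linarith
  then have "b / (1 - \<delta>)\<^sup>2 \<le> (1 - K / 2) * a"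
    using \<open>0 < (1 - \<delta>)\<^sup>2\<close> by (simp add: divide_le_eq mult_ac)
  with assms(3) show ?thesis
    by linarith
qed

lemma inverse_shift_le:
  fixes \<tau> \<alpha> :: real
  assumes "0 < \<tau>" and "1/2 \<le> \<alpha>"
  shows "1 / (1 / \<tau> + \<alpha>) \<le> 2 * (\<tau> / (1 + \<tau>))"
proof -
  have "\<tau> \<le> 2 * \<alpha> * \<tau>"
    using mult_right_mono[OF assms(2), of \<tau>] assms(1) by simp
  then have "0 < 1 + \<alpha> * \<tau>"
    using assms(1) by linarith
  have "1 / \<tau> + \<alpha> = (2 + 2 * \<alpha> * \<tau>) / (2 * \<tau>)"
    using assms(1) by (simp add: add_divide_distrib)
  then have "1 / (1 / \<tau> + \<alpha>) = (2 * \<tau>) / (2 + 2 * \<alpha> * \<tau>)"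
    by simp
  also have "\<dots> \<le> (2 * \<tau>) / (1 + \<tau>)"
    by (rule frac_le) (use assms(1) \<open>\<tau> \<le> 2 * \<alpha> * \<tau>\<close> in linarith)+
  finally show ?thesis
    by simp
qed

lemma shift_le_margin:
  fixes \<tau> \<alpha> k :: real
  assumes "0 < \<tau>" and "1/2 \<le> \<alpha>" and "0 \<le> k"
  shows "1 / \<tau> + \<alpha> + k \<le> (1 + \<alpha> + k) * (1 + 2 / \<tau>)"
  using assms by (simp add: field_simps)

lemma shift_sq_le_margin:
  fixes \<tau> \<alpha> k :: real
  assumes "0 < \<tau>" and "1/2 \<le> \<alpha>" and "0 \<le> k"
  shows "\<tau> / (1 + \<tau>) * (1 / \<tau> + \<alpha> + k)\<^sup>2 \<le> (1 + \<alpha> + k)\<^sup>2 * (1 + 2 / \<tau>)"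
proof -
  define A where "A = 1 + \<alpha> + k"
  define s where "s = \<tau> / (1 + \<tau>)"
  have "0 < s"
    using assms(1) by (simp add: s_def)
  have "0 < 1 / \<tau> + \<alpha> + k" and "1 / \<tau> + \<alpha> + k \<le> A * ((1 + \<tau>) / \<tau>)"
    using assms by (simp_all add: A_def field_simps add_pos_nonneg)
  then have "s * (1 / \<tau> + \<alpha> + k)\<^sup>2 \<le> s * (A * ((1 + \<tau>) / \<tau>))\<^sup>2"
    using \<open>0 < s\<close> by (intro mult_left_mono power_mono) auto
  also have "\<dots> = A\<^sup>2 * ((1 + \<tau>) / \<tau>) * (s * ((1 + \<tau>) / \<tau>))"
    by (simp add: power2_eq_square mult_ac)
  also have "\<dots> = A\<^sup>2 * ((1 + \<tau>) / \<tau>)"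
    using assms(1) by (simp add: s_def)
  also have "\<dots> \<le> A\<^sup>2 * (1 + 2 / \<tau>)"
    using assms(1) by (intro mult_left_mono) (auto simp: field_simps)
  finally show ?thesis
    by (simp add: A_def s_def)
qed

lemma one_minus_power_le_exp:
  fixes x :: real
  assumes "x \<le> 1"
  shows "(1 - x) ^ n \<le> exp (- (x * real n))"
proof -
  have "(1 - x) ^ n \<le> exp (- x) ^ n"
    using assms exp_ge_add_one_self[of "- x"] by (intro power_mono) simp_all
  also have "\<dots> = exp (real n * - x)"
    by (rule exp_of_nat_mult[symmetric])
  finally show ?thesis
    by (simp add: mult.commute)
qed

lemma power_decay_le_exp_sq:
  fixes k \<tau> :: real
  assumes "0 < \<tau>" and "0 \<le> k" and "k \<le> 1/2"
  shows "(1 - k / 2 * (\<tau> / (1 + \<tau>))) ^ n \<le> (exp (- (k / 4) * real n * \<tau> / (1 + \<tau>)))\<^sup>2"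
proof -
  have "k / 2 * (\<tau> / (1 + \<tau>)) \<le> 1"
    using assms by (intro mult_le_one) auto
  then have "(1 - k / 2 * (\<tau> / (1 + \<tau>))) ^ n \<le> exp (- (k / 2 * (\<tau> / (1 + \<tau>)) * real n))"
    by (rule one_minus_power_le_exp)
  also have "- (k / 2 * (\<tau> / (1 + \<tau>)) * real n) = 2 * (- (k / 4) * real n * \<tau> / (1 + \<tau>))"
    using assms(1) by (simp add: field_simps)
  also have "exp \<dots> = (exp (- (k / 4) * real n * \<tau> / (1 + \<tau>)))\<^sup>2"
    by (simp only: mult_2 exp_add power2_eq_square)
  finally show ?thesis .
qed

(* K is the matrix of -D_xx/2, Vw the grid values of V + omega, and c the constant of (NDh). *)
locale gfalm_ground_state =
  fixes M :: nat and h :: real and K :: "nat \<Rightarrow> nat \<Rightarrow> real" and Vw :: "nat \<Rightarrow> real"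
    and p lam \<alpha> c :: real and us :: "nat \<Rightarrow> real"
  assumes M_pos: "0 < M" and h_pos: "0 < h"
    and K_sym: "\<And>j l. j < M \<Longrightarrow> l < M \<Longrightarrow> K j l = K l j"
    and K_psd: "\<And>u. 0 \<le> (\<Sum>j<M. u j * (\<Sum>l<M. K j l * u l))"
    and p_gt_1: "1 < p" and lam_nonneg: "0 \<le> lam"
    and alpha_ge_half: "1/2 \<le> \<alpha>" and alpha_dominates: "\<And>j. j < M \<Longrightarrow> 1 \<le> 2 * \<alpha> - Vw j"
    and us_normalized: "h * (\<Sum>j<M. \<bar>us j\<bar> powr (p + 1)) = 1"
    and euler_lagrange: "\<And>j. j < M \<Longrightarrow>
          (\<Sum>l<M. K j l * us l) + Vw j * us j = lam * (\<bar>us j\<bar> powr (p - 1) * us j)"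
    and c_pos: "0 < c"
    and nondegenerate: "\<And>\<xi>. (\<Sum>j<M. (\<bar>us j\<bar> powr (p - 1) * us j) * \<xi> j) = 0 \<Longrightarrow>
          c * (\<Sum>j<M. \<xi> j * \<xi> j)
            \<le> (\<Sum>j<M. ((\<Sum>l<M. K j l * \<xi> l) + (Vw j - p * lam * \<bar>us j\<bar> powr (p - 1)) * \<xi> j) * \<xi> j)"
begin

definition dot :: "(nat \<Rightarrow> real) \<Rightarrow> (nat \<Rightarrow> real) \<Rightarrow> real" where
  "dot u v = (\<Sum>j<M. u j * v j)"

definition enorm :: "(nat \<Rightarrow> real) \<Rightarrow> real" where
  "enorm u = L2_set u {..<M}"

definition Kop :: "(nat \<Rightarrow> real) \<Rightarrow> nat \<Rightarrow> real" where
  "Kop u j = (\<Sum>l<M. K j l * u l)"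

definition op :: "(nat \<Rightarrow> real) \<Rightarrow> (nat \<Rightarrow> real) \<Rightarrow> nat \<Rightarrow> real" where
  "op D u j = Kop u j + D j * u j"

definition K_bound :: real where
  "K_bound = sqrt (\<Sum>j<M. \<Sum>l<M. (K j l)\<^sup>2)"

definition op_bound :: "(nat \<Rightarrow> real) \<Rightarrow> real" where
  "op_bound D = K_bound + (\<Sum>j<M. \<bar>D j\<bar>)"

definition w :: "nat \<Rightarrow> real" where
  "w j = \<bar>us j\<bar> powr (p - 1) * us j"

definition hess_diag :: "nat \<Rightarrow> real" where
  "hess_diag j = Vw j - p * lam * \<bar>us j\<bar> powr (p - 1)"

abbreviation Aop :: "(nat \<Rightarrow> real) \<Rightarrow> nat \<Rightarrow> real" where
  "Aop \<equiv> op Vw"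

abbreviation Hop :: "(nat \<Rightarrow> real) \<Rightarrow> nat \<Rightarrow> real" where
  "Hop \<equiv> op hess_diag"

definition qmass :: "(nat \<Rightarrow> real) \<Rightarrow> real" where
  "qmass u = h * (\<Sum>j<M. \<bar>u j\<bar> powr (p + 1))"

section \<open>Grid functions and the linearised operator\<close>

lemma dot_commute: "dot u v = dot v u"
  by (simp add: dot_def mult.commute)

lemma dot_add_left: "dot (\<lambda>j. u j + v j) x = dot u x + dot v x"
  and dot_diff_left: "dot (\<lambda>j. u j - v j) x = dot u x - dot v x"
  and dot_scale_left: "dot (\<lambda>j. a * u j) x = a * dot u x"
  and dot_add_right: "dot x (\<lambda>j. u j + v j) = dot x u + dot x v"
  and dot_diff_right: "dot x (\<lambda>j. u j - v j) = dot x u - dot x v"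
  and dot_scale_right: "dot x (\<lambda>j. a * u j) = a * dot x u"
  by (simp_all add: dot_def algebra_simps sum.distrib sum_subtractf sum_distrib_left)

lemma dot_cong: "(\<And>j. j < M \<Longrightarrow> u j = u' j) \<Longrightarrow> (\<And>j. j < M \<Longrightarrow> v j = v' j) \<Longrightarrow> dot u v = dot u' v'"
  by (simp add: dot_def)

lemma enorm_nonneg: "0 \<le> enorm u"
  by (simp add: enorm_def)

lemma dot_self: "dot u u = (enorm u)\<^sup>2"
  by (simp add: dot_def enorm_def L2_set_def sum_nonneg power2_eq_square)

lemma abs_dot_le: "\<bar>dot u v\<bar> \<le> enorm u * enorm v"
proof -
  have "\<bar>dot u v\<bar> \<le> (\<Sum>j<M. \<bar>u j\<bar> * \<bar>v j\<bar>)"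
    unfolding dot_def by (rule order_trans[OF sum_abs]) (simp add: abs_mult)
  also have "\<dots> \<le> enorm u * enorm v"
    unfolding enorm_def by (rule L2_set_mult_ineq)
  finally show ?thesis .
qed

lemma abs_le_enorm: "j < M \<Longrightarrow> \<bar>u j\<bar> \<le> enorm u"
  using member_le_L2_set[of "{..<M}" j "\<lambda>j. \<bar>u j\<bar>"] by (simp add: enorm_def L2_set_def)

lemma sum_abs_le_enorm: "(\<Sum>j<M. \<bar>u j\<bar>) \<le> real M * enorm u"
  using sum_mono[of "{..<M}" "\<lambda>j. \<bar>u j\<bar>" "\<lambda>_. enorm u"] abs_le_enorm by simp

lemma enorm_add_le: "enorm (\<lambda>j. u j + v j) \<le> enorm u + enorm v"
  unfolding enorm_def by (rule L2_set_triangle_ineq)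

lemma enorm_scale: "enorm (\<lambda>j. a * u j) = \<bar>a\<bar> * enorm u"
  by (simp add: enorm_def L2_set_def power_mult_distrib real_sqrt_mult flip: sum_distrib_left)

lemma enorm_diff_le: "enorm (\<lambda>j. u j - v j) \<le> enorm u + enorm v"
  using enorm_add_le[of u "\<lambda>j. - v j"] enorm_scale[of "-1" v] by simp

lemma enorm_cong: "(\<And>j. j < M \<Longrightarrow> u j = u' j) \<Longrightarrow> enorm u = enorm u'"
  unfolding enorm_def by (rule L2_set_cong) auto

lemma enorm_le_scaled:
  assumes "0 \<le> a" and "\<And>j. j < M \<Longrightarrow> \<bar>f j\<bar> \<le> a * \<bar>g j\<bar>"
  shows "enorm f \<le> a * enorm g"
proof -
  have "enorm f = L2_set (\<lambda>j. \<bar>f j\<bar>) {..<M}"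
    by (simp add: enorm_def L2_set_def)
  also have "\<dots> \<le> L2_set (\<lambda>j. a * \<bar>g j\<bar>) {..<M}"
    using assms by (intro L2_set_mono) auto
  also have "\<dots> = a * enorm g"
    using assms(1) by (simp add: enorm_def L2_set_def power_mult_distrib real_sqrt_mult flip: sum_distrib_left)
  finally show ?thesis .
qed

lemma enorm_diag_le: "(\<And>j. j < M \<Longrightarrow> \<bar>D j\<bar> \<le> B) \<Longrightarrow> enorm (\<lambda>j. D j * u j) \<le> B * enorm u"
  using M_pos by (intro enorm_le_scaled) (force simp: abs_mult intro: mult_right_mono)+

lemma Kop_add: "Kop (\<lambda>j. u j + v j) = (\<lambda>j. Kop u j + Kop v j)"
  and Kop_diff: "Kop (\<lambda>j. u j - v j) = (\<lambda>j. Kop u j - Kop v j)"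
  and Kop_scale: "Kop (\<lambda>j. a * u j) = (\<lambda>j. a * Kop u j)"
  by (simp_all add: fun_eq_iff Kop_def algebra_simps sum.distrib sum_subtractf sum_distrib_left)

lemma op_add: "op D (\<lambda>j. u j + v j) = (\<lambda>j. op D u j + op D v j)"
  and op_diff: "op D (\<lambda>j. u j - v j) = (\<lambda>j. op D u j - op D v j)"
  and op_scale: "op D (\<lambda>j. a * u j) = (\<lambda>j. a * op D u j)"
  by (simp_all add: fun_eq_iff op_def Kop_add Kop_diff Kop_scale algebra_simps)

lemma op_cong: "(\<And>j. j < M \<Longrightarrow> u j = u' j) \<Longrightarrow> j < M \<Longrightarrow> op D u j = op D u' j"
  by (simp add: op_def Kop_def)

lemma dot_Kop_sym: "dot (Kop u) v = dot u (Kop v)"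
proof -
  have "dot (Kop u) v = (\<Sum>j<M. \<Sum>l<M. K j l * u l * v j)"
    by (simp add: dot_def Kop_def sum_distrib_right)
  also have "\<dots> = (\<Sum>l<M. \<Sum>j<M. u l * (K l j * v j))"
    by (subst sum.swap) (auto intro!: sum.cong simp: K_sym)
  also have "\<dots> = dot u (Kop v)"
    by (simp add: dot_def Kop_def sum_distrib_left)
  finally show ?thesis .
qed

lemma dot_Kop_nonneg: "0 \<le> dot (Kop u) u"
  using K_psd[of u] by (simp add: dot_def Kop_def mult.commute)

lemma enorm_Kop_le: "enorm (Kop u) \<le> K_bound * enorm u"
proof -
  have "(Kop u j)\<^sup>2 \<le> (\<Sum>l<M. (K j l)\<^sup>2) * (\<Sum>l<M. (u l)\<^sup>2)" for j
    unfolding Kop_def by (rule Cauchy_Schwarz_ineq_sum)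
  then have "(\<Sum>j<M. (Kop u j)\<^sup>2) \<le> (\<Sum>j<M. \<Sum>l<M. (K j l)\<^sup>2) * (\<Sum>l<M. (u l)\<^sup>2)"
    using sum_mono[of "{..<M}" "\<lambda>j. (Kop u j)\<^sup>2"] by (simp add: sum_distrib_right)
  then have "sqrt (\<Sum>j<M. (Kop u j)\<^sup>2) \<le> sqrt ((\<Sum>j<M. \<Sum>l<M. (K j l)\<^sup>2) * (\<Sum>l<M. (u l)\<^sup>2))"
    by (rule real_sqrt_le_mono)
  then show ?thesis
    by (simp add: enorm_def L2_set_def K_bound_def real_sqrt_mult)
qed

lemma K_bound_nonneg: "0 \<le> K_bound"
  by (simp add: K_bound_def sum_nonneg)

lemma op_bound_nonneg: "0 \<le> op_bound D"
  by (simp add: op_bound_def K_bound_nonneg sum_nonneg)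

lemma dot_op: "dot (op D u) v = dot (Kop u) v + (\<Sum>j<M. D j * u j * v j)"
  by (simp add: dot_def op_def algebra_simps sum.distrib)

lemma dot_op_sym: "dot (op D u) v = dot u (op D v)"
  by (simp add: dot_op dot_Kop_sym dot_commute[of u] mult_ac)

lemma enorm_op_le: "enorm (op D u) \<le> op_bound D * enorm u"
proof -
  have "enorm (op D u) \<le> enorm (Kop u) + enorm (\<lambda>j. D j * u j)"
    unfolding op_def by (rule enorm_add_le)
  also have "\<dots> \<le> K_bound * enorm u + (\<Sum>j<M. \<bar>D j\<bar>) * enorm u"
    by (intro add_mono enorm_Kop_le enorm_diag_le member_le_sum) auto
  finally show ?thesis
    by (simp add: op_bound_def algebra_simps)
qed

lemma dot_op_le: "dot (op D u) u \<le> op_bound D * (enorm u)\<^sup>2"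
proof -
  have "dot (op D u) u \<le> enorm (op D u) * enorm u"
    using abs_dot_le[of "op D u" u] by simp
  also have "\<dots> \<le> op_bound D * enorm u * enorm u"
    by (intro mult_right_mono enorm_op_le enorm_nonneg)
  finally show ?thesis
    by (simp add: power2_eq_square)
qed

lemma qmass_us: "qmass us = 1"
  using us_normalized by (simp add: qmass_def)

lemma dot_w_us: "dot w us = 1 / h"
proof -
  have "dot w us = (\<Sum>j<M. \<bar>us j\<bar> powr (p + 1))"
    by (simp add: dot_def w_def abs_powr_add_one_eq)
  with us_normalized h_pos show ?thesis
    by (simp add: field_simps)
qed

lemma Aop_us: "j < M \<Longrightarrow> Aop us j = lam * w j"
  using euler_lagrange[of j] by (simp add: op_def Kop_def w_def)

lemma Hop_us: "j < M \<Longrightarrow> Hop us j = (1 - p) * lam * w j"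
  using euler_lagrange[of j] by (simp add: op_def Kop_def w_def hess_diag_def algebra_simps)

lemma dot_Aop_us: "dot (Aop u) us = lam * dot w u"
proof -
  have "dot (Aop u) us = dot u (\<lambda>j. lam * w j)"
    unfolding dot_op_sym[of _ u] by (rule dot_cong) (simp_all add: Aop_us)
  then show ?thesis
    by (simp add: dot_scale_right dot_commute)
qed

lemma dot_Hop_us: "dot (Hop u) us = (1 - p) * lam * dot w u"
proof -
  have "dot (Hop u) us = dot u (\<lambda>j. (1 - p) * lam * w j)"
    unfolding dot_op_sym[of _ u] by (rule dot_cong) (simp_all add: Hop_us)
  then show ?thesis
    by (simp add: dot_scale_right dot_commute)
qed

lemma Hop_coercive: "dot w \<xi> = 0 \<Longrightarrow> c * (enorm \<xi>)\<^sup>2 \<le> dot (Hop \<xi>) \<xi>"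
  using nondegenerate[of \<xi>]
  by (simp add: dot_self[symmetric] dot_def w_def op_def Kop_def hess_diag_def)

definition deviation :: "(nat \<Rightarrow> real) \<Rightarrow> real" where
  "deviation u = enorm (\<lambda>j. u j - us j)"

definition normal_part :: "(nat \<Rightarrow> real) \<Rightarrow> real" where
  "normal_part u = h * dot w (\<lambda>j. u j - us j)"

definition proj :: "(nat \<Rightarrow> real) \<Rightarrow> nat \<Rightarrow> real" where
  "proj v j = v j - h * dot w v * us j"

definition proj_bound :: real where
  "proj_bound = 1 + h * enorm w * enorm us"

definition lyap :: "(nat \<Rightarrow> real) \<Rightarrow> real" where
  "lyap u = dot (Hop (proj u)) (proj u)"

lemma deviation_nonneg: "0 \<le> deviation u"
  by (simp add: deviation_def enorm_nonneg)

lemma abs_le_deviation: "j < M \<Longrightarrow> \<bar>u j - us j\<bar> \<le> deviation u"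
  unfolding deviation_def by (rule abs_le_enorm)

lemma dot_w_proj: "dot w (proj v) = 0"
  using h_pos by (simp add: proj_def[abs_def] dot_diff_right dot_scale_right dot_w_us)

lemma proj_diff: "proj (\<lambda>j. u j - v j) = (\<lambda>j. proj u j - proj v j)"
  and proj_scale: "proj (\<lambda>j. a * u j) = (\<lambda>j. a * proj u j)"
  by (simp_all add: fun_eq_iff proj_def dot_diff_right dot_scale_right algebra_simps)

lemma proj_us: "proj us j = 0"
  using h_pos by (simp add: proj_def dot_w_us)

lemma proj_sub_us: "proj (\<lambda>j. u j - us j) = proj u"
  by (rule ext) (simp add: proj_diff proj_us)

lemma deviation_decomposition: "u j - us j = proj u j + normal_part u * us j"
  using h_pos by (simp add: proj_def normal_part_def dot_diff_right dot_w_us algebra_simps)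

lemma proj_bound_pos: "0 < proj_bound"
  using h_pos enorm_nonneg[of w] enorm_nonneg[of us] by (simp add: proj_bound_def add_pos_nonneg)

lemma enorm_proj_le: "enorm (proj v) \<le> proj_bound * enorm v"
proof -
  have "enorm (proj v) \<le> enorm v + enorm (\<lambda>j. (h * dot w v) * us j)"
    unfolding proj_def[abs_def] by (rule enorm_diff_le)
  also have "\<dots> = enorm v + h * \<bar>dot w v\<bar> * enorm us"
    using h_pos by (simp add: enorm_scale abs_mult)
  also have "\<dots> \<le> enorm v + h * (enorm w * enorm v) * enorm us"
    using h_pos abs_dot_le[of w v] enorm_nonneg[of us]
    by (intro add_left_mono mult_right_mono mult_left_mono) auto
  finally show ?thesis
    by (simp add: proj_bound_def algebra_simps)
qed

lemma lyap_nonneg: "0 \<le> lyap u"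
  using Hop_coercive[OF dot_w_proj, of u] c_pos unfolding lyap_def
  by (smt (verit) zero_le_power2 mult_nonneg_nonneg)

lemma lyap_lower: "c * (enorm (proj u))\<^sup>2 \<le> lyap u"
  unfolding lyap_def by (rule Hop_coercive[OF dot_w_proj])

lemma lyap_upper: "lyap u \<le> op_bound hess_diag * proj_bound\<^sup>2 * (deviation u)\<^sup>2"
proof -
  have "lyap u \<le> op_bound hess_diag * (enorm (proj (\<lambda>j. u j - us j)))\<^sup>2"
    unfolding lyap_def proj_sub_us by (rule dot_op_le)
  also have "\<dots> \<le> op_bound hess_diag * (proj_bound * deviation u)\<^sup>2"
    unfolding deviation_def
    by (intro mult_left_mono power_mono enorm_proj_le enorm_nonneg op_bound_nonneg)
  finally show ?thesis
    by (simp add: power_mult_distrib mult_ac)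
qed

lemma lyap_scale: "lyap (\<lambda>j. a * u j) = a\<^sup>2 * lyap u"
proof -
  show ?thesis
    by (simp add: lyap_def proj_scale op_scale dot_scale_left dot_scale_right power2_eq_square)
qed

definition near_ground :: "(nat \<Rightarrow> real) filter" where
  "near_ground = (INF \<rho>\<in>{0<..}. principal {u. qmass u = 1 \<and> deviation u < \<rho>})"

lemma eventually_near_ground:
  "eventually P near_ground \<longleftrightarrow> (\<exists>\<rho>>0. \<forall>u. qmass u = 1 \<longrightarrow> deviation u < \<rho> \<longrightarrow> P u)"
proof -
  have "eventually P near_ground \<longleftrightarrow>
      (\<exists>\<rho>\<in>{0<..}. eventually P (principal {u. qmass u = 1 \<and> deviation u < \<rho>}))"
    unfolding near_ground_def
  proof (rule eventually_INF_base)
    fix a b :: real assume "a \<in> {0<..}" "b \<in> {0<..}"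
    then show "\<exists>x\<in>{0<..}. principal {u. qmass u = 1 \<and> deviation u < x}
        \<le> inf (principal {u. qmass u = 1 \<and> deviation u < a}) (principal {u. qmass u = 1 \<and> deviation u < b})"
      by (intro bexI[of _ "min a b"]) auto
  qed auto
  then show ?thesis
    by (auto simp: eventually_principal)
qed

lemma eventually_qmass_near_ground: "eventually (\<lambda>u. qmass u = 1) near_ground"
  unfolding eventually_near_ground by (auto intro: exI[of _ 1])

lemma eventually_deviation_less: "0 < \<rho> \<Longrightarrow> eventually (\<lambda>u. deviation u < \<rho>) near_ground"
  unfolding eventually_near_ground by auto

lemma deviation_smallo_1: "deviation \<in> o[near_ground](\<lambda>_. 1)"
proof (rule landau_o.smallI)
  fix e :: real assume "0 < e"
  from eventually_deviation_less[OF this]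
  show "eventually (\<lambda>u. norm (deviation u) \<le> e * norm (1 :: real)) near_ground"
    by eventually_elim (simp add: deviation_nonneg)
qed

lemma eventually_near_ground_componentwise:
  assumes "\<And>j. j < M \<Longrightarrow> eventually (P j) (nhds (us j))"
  shows "eventually (\<lambda>u. \<forall>j<M. P j (u j)) near_ground"
proof -
  have "((\<lambda>u. u j) \<longlongrightarrow> us j) near_ground" if "j < M" for j
  proof (rule tendstoI)
    fix e :: real assume "0 < e"
    from eventually_deviation_less[OF this]
    show "eventually (\<lambda>u. dist (u j) (us j) < e) near_ground"
      by eventually_elim (use abs_le_deviation[OF \<open>j < M\<close>] in \<open>auto simp: dist_real_def intro: le_less_trans\<close>)
  qed
  then have "\<forall>j\<in>{..<M}. eventually (\<lambda>u. P j (u j)) near_ground"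
    using assms by (auto simp: filterlim_iff)
  from eventually_ball_finite[OF finite_lessThan this] show ?thesis
    by (auto elim: eventually_mono)
qed


section \<open>Expansion of the gradient at the ground state\<close>

definition lam_of :: "(nat \<Rightarrow> real) \<Rightarrow> real" where
  "lam_of u = h * dot (Aop u) u / qmass u"

definition grad :: "(nat \<Rightarrow> real) \<Rightarrow> nat \<Rightarrow> real" where
  "grad u j = Aop u j - lam_of u * (\<bar>u j\<bar> powr (p - 1) * u j)"

lemma smallo_const_mult: "f \<in> o[F](g) \<Longrightarrow> (\<lambda>x. a * f x) \<in> o[F](g)"
  for f g :: "'b \<Rightarrow> real"
  by (cases "a = 0") simp_all

lemma normal_part_smallo: "normal_part \<in> o[near_ground](deviation)"
proof (rule landau_o.smallI)
  fix \<epsilon> :: real assume "0 < \<epsilon>"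
  define \<epsilon>' where "\<epsilon>' = \<epsilon> / (h * real M)"
  have "0 < \<epsilon>'" using \<open>0 < \<epsilon>\<close> h_pos M_pos by (simp add: \<epsilon>'_def)
  have "eventually (\<lambda>u. \<forall>j<M. \<bar>\<bar>u j\<bar> powr (p + 1) - \<bar>us j\<bar> powr (p + 1) - (p + 1) * w j * (u j - us j)\<bar>
      \<le> \<epsilon>' * \<bar>u j - us j\<bar>) near_ground"
  proof (rule eventually_near_ground_componentwise)
    fix j
    show "eventually (\<lambda>y. \<bar>\<bar>y\<bar> powr (p + 1) - \<bar>us j\<bar> powr (p + 1) - (p + 1) * w j * (y - us j)\<bar>
        \<le> \<epsilon>' * \<bar>y - us j\<bar>) (nhds (us j))"
      using eventually_derivative_remainder_le[OF abs_powr_add_one_has_real_derivative[OF p_gt_1, of "us j"] \<open>0 < \<epsilon>'\<close>]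
      by (simp add: w_def mult_ac)
  qed
  with eventually_qmass_near_ground
  show "eventually (\<lambda>u. norm (normal_part u) \<le> \<epsilon> * norm (deviation u)) near_ground"
  proof eventually_elim
    case (elim u)
    define R where "R j = \<bar>u j\<bar> powr (p + 1) - \<bar>us j\<bar> powr (p + 1) - (p + 1) * w j * (u j - us j)" for j
    have "h * (\<Sum>j<M. \<bar>u j\<bar> powr (p + 1)) = h * (\<Sum>j<M. \<bar>us j\<bar> powr (p + 1))"
      using elim(1) qmass_us by (simp add: qmass_def)
    then have "(\<Sum>j<M. \<bar>u j\<bar> powr (p + 1)) = (\<Sum>j<M. \<bar>us j\<bar> powr (p + 1))"
      using h_pos by simp
    then have "(p + 1) * dot w (\<lambda>j. u j - us j) = - (\<Sum>j<M. R j)"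
      by (simp add: R_def dot_def sum_subtractf sum_distrib_left mult_ac)
    then have "(p + 1) * \<bar>dot w (\<lambda>j. u j - us j)\<bar> = \<bar>\<Sum>j<M. R j\<bar>"
      using p_gt_1 by (metis abs_minus_cancel abs_mult abs_of_pos add_pos_pos less_trans zero_less_one)
    also have "\<dots> \<le> (\<Sum>j<M. \<bar>R j\<bar>)"
      by (rule sum_abs)
    also have "\<dots> \<le> (\<Sum>j<M. \<epsilon>' * \<bar>u j - us j\<bar>)"
      using elim(2) by (intro sum_mono) (simp add: R_def)
    also have "\<dots> \<le> \<epsilon>' * (real M * deviation u)"
      using sum_abs_le_enorm[of "\<lambda>j. u j - us j"] \<open>0 < \<epsilon>'\<close>
      by (simp add: deviation_def sum_distrib_left[symmetric])
    finally have "h * \<bar>dot w (\<lambda>j. u j - us j)\<bar> \<le> \<epsilon> * deviation u"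
      using p_gt_1 h_pos M_pos \<open>0 < \<epsilon>\<close> deviation_nonneg[of u]
      by (simp add: \<epsilon>'_def field_simps) (smt (verit) mult_left_mono mult_nonneg_nonneg)
    then show ?case
      using h_pos by (simp add: normal_part_def abs_mult deviation_nonneg)
  qed
qed

lemma signed_powr_remainder_smallo:
  "(\<lambda>u. enorm (\<lambda>j. \<bar>u j\<bar> powr (p - 1) * u j - w j - p * \<bar>us j\<bar> powr (p - 1) * (u j - us j)))
     \<in> o[near_ground](deviation)"
proof (rule landau_o.smallI)
  fix \<epsilon> :: real assume "0 < \<epsilon>"
  have "eventually (\<lambda>u. \<forall>j<M. \<bar>\<bar>u j\<bar> powr (p - 1) * u j - w j - p * \<bar>us j\<bar> powr (p - 1) * (u j - us j)\<bar>
      \<le> \<epsilon> * \<bar>u j - us j\<bar>) near_ground"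
  proof (rule eventually_near_ground_componentwise)
    fix j
    show "eventually (\<lambda>y. \<bar>\<bar>y\<bar> powr (p - 1) * y - w j - p * \<bar>us j\<bar> powr (p - 1) * (y - us j)\<bar>
        \<le> \<epsilon> * \<bar>y - us j\<bar>) (nhds (us j))"
      using eventually_derivative_remainder_le[OF signed_powr_has_real_derivative[OF p_gt_1, of "us j"] \<open>0 < \<epsilon>\<close>]
      by (simp add: w_def mult_ac)
  qed
  then show "eventually (\<lambda>u. norm (enorm (\<lambda>j. \<bar>u j\<bar> powr (p - 1) * u j - w j
      - p * \<bar>us j\<bar> powr (p - 1) * (u j - us j))) \<le> \<epsilon> * norm (deviation u)) near_ground"
    by eventually_elim
      (use \<open>0 < \<epsilon>\<close> in \<open>simp add: enorm_nonneg deviation_nonneg deviation_def enorm_le_scaled\<close>)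
qed

lemma lam_of_expansion:
  assumes "qmass u = 1"
  shows "lam_of u - lam = 2 * lam * normal_part u + h * dot (Aop (\<lambda>j. u j - us j)) (\<lambda>j. u j - us j)"
proof -
  define e where "e j = u j - us j" for j
  have u: "u = (\<lambda>j. us j + e j)"
    by (simp add: e_def)
  have "dot (Aop u) u = dot (Aop us) us + dot (Aop us) e + dot (Aop e) us + dot (Aop e) e"
    by (subst (1 2) u) (simp add: op_add dot_add_left dot_add_right)
  also have "\<dots> = lam / h + 2 * lam * dot w e + dot (Aop e) e"
    using dot_op_sym[of Vw us e] by (simp add: dot_Aop_us dot_w_us dot_commute[of us])
  finally show ?thesis
    using assms h_pos by (simp add: lam_of_def normal_part_def e_def[abs_def] field_simps)
qed

lemma lam_of_smallo: "(\<lambda>u. lam_of u - lam) \<in> o[near_ground](deviation)"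
proof -
  let ?Q = "\<lambda>u. h * dot (Aop (\<lambda>j. u j - us j)) (\<lambda>j. u j - us j)"
  have "(\<lambda>u. deviation u * deviation u) \<in> o[near_ground](\<lambda>u. 1 * deviation u)"
    by (rule landau_o.small_big_mult[OF deviation_smallo_1 landau_o.big_refl])
  moreover have "?Q \<in> O[near_ground](\<lambda>u. deviation u * deviation u)"
  proof (rule landau_o.bigI)
    show "0 < h * op_bound Vw + 1"
      using h_pos op_bound_nonneg[of Vw] by (simp add: add_nonneg_pos)
    show "eventually (\<lambda>u. norm (?Q u) \<le> (h * op_bound Vw + 1) * norm (deviation u * deviation u)) near_ground"
    proof (intro always_eventually allI)
      fix u
      have "\<bar>dot (Aop (\<lambda>j. u j - us j)) (\<lambda>j. u j - us j)\<bar> \<le> op_bound Vw * (deviation u * deviation u)"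
        using abs_dot_le[of "Aop (\<lambda>j. u j - us j)"] enorm_op_le[of Vw "\<lambda>j. u j - us j"] deviation_nonneg[of u]
        by (simp add: deviation_def) (smt (verit) mult_right_mono mult.assoc)
      then show "norm (?Q u) \<le> (h * op_bound Vw + 1) * norm (deviation u * deviation u)"
        using h_pos by (simp add: abs_mult algebra_simps)
          (smt (verit) mult_left_mono mult_nonneg_nonneg deviation_nonneg)
    qed
  qed
  ultimately have "?Q \<in> o[near_ground](deviation)"
    by (auto dest: landau_o.big_small_trans)
  then have "(\<lambda>u. 2 * lam * normal_part u + ?Q u) \<in> o[near_ground](deviation)"
    by (rule sum_in_smallo(1)[OF smallo_const_mult[OF normal_part_smallo]])
  moreover have "eventually (\<lambda>u. lam_of u - lam = 2 * lam * normal_part u + ?Q u) near_ground"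
    using eventually_qmass_near_ground by eventually_elim (rule lam_of_expansion)
  ultimately show ?thesis
    by (simp add: landau_o.small.in_cong)
qed


lemma grad_minus_Hop_proj:
  assumes "j < M"
  shows "grad u j - Hop (proj u) j
    = (1 - p) * lam * normal_part u * w j
      - lam * (\<bar>u j\<bar> powr (p - 1) * u j - w j - p * \<bar>us j\<bar> powr (p - 1) * (u j - us j))
      - (lam_of u - lam) * (\<bar>u j\<bar> powr (p - 1) * u j)"
proof -
  define e where "e j = u j - us j" for j
  have "proj u = (\<lambda>j. e j - normal_part u * us j)"
    by (simp add: fun_eq_iff e_def deviation_decomposition)
  then have "Hop (proj u) j = Hop e j - normal_part u * ((1 - p) * lam * w j)"
    using assms by (simp add: op_diff op_scale Hop_us)
  moreover have "Aop u j = lam * w j + Aop e j"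
  proof -
    have "u = (\<lambda>j. us j + e j)"
      by (simp add: e_def)
    then show ?thesis
      using assms by (metis op_add Aop_us)
  qed
  ultimately show ?thesis
    by (simp add: grad_def e_def op_def hess_diag_def algebra_simps)
qed

lemma enorm_signed_powr_bigo_1: "(\<lambda>u. enorm (\<lambda>j. \<bar>u j\<bar> powr (p - 1) * u j)) \<in> O[near_ground](\<lambda>_. 1)"
proof (rule landau_o.bigI)
  define B where "B = real M * (enorm us + 1) powr p + 1"
  show "0 < B"
    by (simp add: B_def add_nonneg_pos)
  show "eventually (\<lambda>u. norm (enorm (\<lambda>j. \<bar>u j\<bar> powr (p - 1) * u j)) \<le> B * norm (1 :: real)) near_ground"
    using eventually_deviation_less[OF zero_less_one]
  proof eventually_elim
    case (elim u)
    have "\<bar>\<bar>u j\<bar> powr (p - 1) * u j\<bar> \<le> (enorm us + 1) powr p" if "j < M" for j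
    proof -
      have "\<bar>u j\<bar> \<le> \<bar>us j\<bar> + \<bar>u j - us j\<bar>"
        by linarith
      also have "\<dots> \<le> enorm us + 1"
        using abs_le_enorm[OF that, of us] abs_le_deviation[OF that, of u] elim by linarith
      finally show ?thesis
        using p_gt_1 by (simp add: abs_signed_powr powr_mono2)
    qed
    then have "enorm (\<lambda>j. \<bar>u j\<bar> powr (p - 1) * u j) \<le> (\<Sum>j<M. (enorm us + 1) powr p)"
      unfolding enorm_def by (intro order_trans[OF L2_set_le_sum_abs] sum_mono) auto
    then show ?case
      by (simp add: B_def enorm_nonneg)
  qed
qed

lemma grad_residual_smallo:
  "(\<lambda>u. enorm (\<lambda>j. grad u j - Hop (proj u) j)) \<in> o[near_ground](deviation)"
proof -
  let ?R = "\<lambda>u. enorm (\<lambda>j. \<bar>u j\<bar> powr (p - 1) * u j - w j - p * \<bar>us j\<bar> powr (p - 1) * (u j - us j))"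
  let ?G = "\<lambda>u. enorm (\<lambda>j. \<bar>u j\<bar> powr (p - 1) * u j)"
  let ?bound = "\<lambda>u. lam * ?R u + \<bar>lam_of u - lam\<bar> * ?G u + (p - 1) * lam * enorm w * \<bar>normal_part u\<bar>"
  have "(\<lambda>u. \<bar>lam_of u - lam\<bar> * ?G u) \<in> o[near_ground](\<lambda>u. deviation u * 1)"
    using lam_of_smallo enorm_signed_powr_bigo_1 by (intro landau_o.small_big_mult) simp_all
  then have "?bound \<in> o[near_ground](deviation)"
    by (intro sum_in_smallo(1) smallo_const_mult signed_powr_remainder_smallo)
      (simp_all add: normal_part_smallo)
  moreover have "enorm (\<lambda>j. grad u j - Hop (proj u) j) \<le> ?bound u" for u
  proof -
    have "enorm (\<lambda>j. grad u j - Hop (proj u) j)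
        \<le> enorm (\<lambda>j. ((1 - p) * lam * normal_part u) * w j)
          + enorm (\<lambda>j. lam * (\<bar>u j\<bar> powr (p - 1) * u j - w j - p * \<bar>us j\<bar> powr (p - 1) * (u j - us j)))
          + enorm (\<lambda>j. (lam_of u - lam) * (\<bar>u j\<bar> powr (p - 1) * u j))"
      by (simp only: enorm_cong[OF grad_minus_Hop_proj])
        (intro order_trans[OF enorm_diff_le] add_mono order_refl enorm_diff_le)
    also have "\<dots> = ?bound u"
      using lam_nonneg p_gt_1 by (simp add: enorm_scale abs_mult)
    finally show ?thesis .
  qed
  then have "(\<lambda>u. enorm (\<lambda>j. grad u j - Hop (proj u) j)) \<in> O[near_ground](?bound)"
    by (intro landau_o.big_mono always_eventually allI) (simp add: enorm_nonneg order_trans[OF _ abs_ge_self])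
  ultimately show ?thesis
    by (blast intro: landau_o.big_small_trans)
qed


section \<open>The linearised step\<close>

lemma weighted_normal_bound: "h * (dot w d)\<^sup>2 \<le> (\<Sum>j<M. \<bar>us j\<bar> powr (p - 1) * (d j)\<^sup>2)"
proof -
  define a where "a j = sqrt (\<bar>us j\<bar> powr (p - 1))" for j
  have "(dot w d)\<^sup>2 = (\<Sum>j<M. (a j * us j) * (a j * d j))\<^sup>2"
    by (simp add: dot_def w_def a_def algebra_simps flip: real_sqrt_mult)
  also have "\<dots> \<le> (\<Sum>j<M. (a j * us j)\<^sup>2) * (\<Sum>j<M. (a j * d j)\<^sup>2)"
    by (rule Cauchy_Schwarz_ineq_sum)
  also have "(\<Sum>j<M. (a j * us j)\<^sup>2) = 1 / h"
    using dot_w_us by (simp add: dot_def a_def w_def power_mult_distrib power2_eq_square mult_ac)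
  also have "(\<Sum>j<M. (a j * d j)\<^sup>2) = (\<Sum>j<M. \<bar>us j\<bar> powr (p - 1) * (d j)\<^sup>2)"
    by (simp add: a_def power_mult_distrib)
  finally show ?thesis
    using h_pos by (simp add: field_simps)
qed

lemma energy_identity:
  assumes "dot w \<xi> = 0"
  shows "dot (Hop (\<lambda>j. \<xi> j - proj d j)) (\<lambda>j. \<xi> j - proj d j)
    = dot (Hop \<xi>) \<xi> - 2 * dot (Hop \<xi>) d + dot (Hop d) d + (p - 1) * lam * (h * dot w d)\<^sup>2 / h"
proof -
  define \<beta> where "\<beta> = h * dot w d"
  have "(\<lambda>j. \<xi> j - proj d j) = (\<lambda>j. (\<xi> j - d j) + \<beta> * us j)"
    by (simp add: fun_eq_iff proj_def \<beta>_def)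
  moreover have "dot (Hop us) x = (1 - p) * lam * dot w x" for x
    using dot_Hop_us[of x] by (simp add: dot_op_sym dot_commute[of _ us])
  moreover have "dot (Hop d) \<xi> = dot (Hop \<xi>) d"
    by (simp add: dot_op_sym dot_commute[of d])
  ultimately show ?thesis
    using h_pos assms dot_Hop_us[of \<xi>] dot_Hop_us[of d] dot_w_us
    by (simp only: op_add op_diff op_scale dot_add_left dot_add_right dot_diff_left dot_diff_right
        dot_scale_left dot_scale_right) (simp add: \<beta>_def power2_eq_square field_simps)
qed

lemma step_margin:
  assumes "0 < \<tau>"
  shows "(1 + 2 / \<tau>) * (enorm d)\<^sup>2
    \<le> 2 * dot (op (\<lambda>_. 1 / \<tau> + \<alpha>) d) d - dot (Hop d) d - (p - 1) * lam * (h * dot w d)\<^sup>2 / h"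
proof -
  define S where "S = (\<Sum>j<M. \<bar>us j\<bar> powr (p - 1) * (d j)\<^sup>2)"
  have "0 \<le> S"
    by (simp add: S_def sum_nonneg)
  have "2 * dot (op (\<lambda>_. 1 / \<tau> + \<alpha>) d) d - dot (Hop d) d
      = (\<Sum>j<M. (2 * (1 / \<tau> + \<alpha>) - Vw j) * (d j)\<^sup>2) + dot (Kop d) d + p * lam * S"
    by (simp add: dot_op hess_diag_def S_def sum_distrib_left algebra_simps sum.distrib sum_subtractf
        power2_eq_square)
  moreover have "(1 + 2 / \<tau>) * (enorm d)\<^sup>2 \<le> (\<Sum>j<M. (2 * (1 / \<tau> + \<alpha>) - Vw j) * (d j)\<^sup>2)"
    unfolding dot_self[symmetric] dot_def sum_distrib_left
    using alpha_dominates by (intro sum_mono) (auto simp: power2_eq_square intro!: mult_right_mono)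
  moreover have "(p - 1) * lam * (h * dot w d)\<^sup>2 / h \<le> (p - 1) * lam * S"
  proof -
    have "(p - 1) * lam * (h * dot w d)\<^sup>2 / h = (p - 1) * lam * (h * (dot w d)\<^sup>2)"
      using h_pos by (simp add: power2_eq_square)
    also have "\<dots> \<le> (p - 1) * lam * S"
      using weighted_normal_bound p_gt_1 lam_nonneg by (simp add: S_def mult_left_mono)
    finally show ?thesis .
  qed
  moreover have "(p - 1) * lam * S \<le> p * lam * S"
    using lam_nonneg \<open>0 \<le> S\<close> by (simp add: mult_right_mono algebra_simps)
  ultimately show ?thesis
    using dot_Kop_nonneg[of d] by linarith
qed

definition H_bound :: real where
  "H_bound = op_bound hess_diag + 1"

definition A_bound :: real where
  "A_bound = 1 + \<alpha> + K_bound"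

definition kappa :: real where
  "kappa = min (1/2) (c\<^sup>2 / (8 * H_bound * A_bound\<^sup>2))"

definition residual_tol :: real where
  "residual_tol = c / (8 * A_bound)"

lemma H_bound_ge_1: "1 \<le> H_bound"
  using op_bound_nonneg by (simp add: H_bound_def)

lemma A_bound_ge_1: "1 \<le> A_bound"
  using alpha_ge_half K_bound_nonneg by (simp add: A_bound_def)

lemma kappa_pos: "0 < kappa" and kappa_le_half: "kappa \<le> 1/2"
  using c_pos H_bound_ge_1 A_bound_ge_1 by (auto simp: kappa_def)

lemma residual_tol_pos: "0 < residual_tol" and residual_tol_le: "residual_tol \<le> c / 2"
  using c_pos A_bound_ge_1 by (auto simp: residual_tol_def field_simps)

context
  fixes \<tau> :: real and \<xi> d r :: "nat \<Rightarrow> real"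
  assumes tau_pos: "0 < \<tau>" and xi_tangent: "dot w \<xi> = 0"
    and direction_eq: "\<And>j. j < M \<Longrightarrow> op (\<lambda>_. 1 / \<tau> + \<alpha>) d j = Hop \<xi> j + r j"
    and residual_le: "enorm r \<le> residual_tol * enorm \<xi>"
begin

lemma dot_Hop_xi: "dot (Hop \<xi>) x = dot (op (\<lambda>_. 1 / \<tau> + \<alpha>) d) x - dot r x"
proof -
  have "dot (Hop \<xi>) x = dot (\<lambda>j. op (\<lambda>_. 1 / \<tau> + \<alpha>) d j - r j) x"
    by (rule dot_cong) (simp_all add: direction_eq)
  then show ?thesis
    by (simp add: dot_diff_left)
qed

lemma direction_lower_bound: "c * enorm \<xi> \<le> 2 * (1 / \<tau> + \<alpha> + K_bound) * enorm d"
proof -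
  define X where "X = enorm \<xi>"
  define \<Lambda> where "\<Lambda> = 1 / \<tau> + \<alpha> + K_bound"
  have "0 \<le> X" "0 < \<Lambda>"
    using tau_pos alpha_ge_half K_bound_nonneg by (simp_all add: X_def \<Lambda>_def enorm_nonneg add_pos_nonneg)
  have op_le: "enorm (op (\<lambda>_. 1 / \<tau> + \<alpha>) d) \<le> \<Lambda> * enorm d"
  proof -
    have "enorm (op (\<lambda>_. 1 / \<tau> + \<alpha>) d) \<le> enorm (Kop d) + enorm (\<lambda>j. (1 / \<tau> + \<alpha>) * d j)"
      unfolding op_def by (rule enorm_add_le)
    also have "\<dots> \<le> K_bound * enorm d + (1 / \<tau> + \<alpha>) * enorm d"
      using tau_pos alpha_ge_half by (intro add_mono enorm_Kop_le) (simp add: enorm_scale)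
    finally show ?thesis
      by (simp add: \<Lambda>_def algebra_simps)
  qed
  have "c * X * X \<le> dot (Hop \<xi>) \<xi>"
    using Hop_coercive[OF xi_tangent] by (simp add: X_def power2_eq_square)
  also have "\<dots> \<le> enorm (op (\<lambda>_. 1 / \<tau> + \<alpha>) d) * X + enorm r * X"
    using abs_dot_le[of "op (\<lambda>_. 1 / \<tau> + \<alpha>) d" \<xi>] abs_dot_le[of r \<xi>] by (simp add: dot_Hop_xi X_def)
  also have "\<dots> \<le> \<Lambda> * enorm d * X + c / 2 * X * X"
  proof -
    have "enorm r \<le> c / 2 * X"
      using residual_le mult_right_mono[OF residual_tol_le \<open>0 \<le> X\<close>] by (simp add: X_def)
    then show ?thesis
      using op_le \<open>0 \<le> X\<close> by (intro add_mono mult_right_mono) auto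
  qed
  finally have "(c / 2 * X) * X \<le> (\<Lambda> * enorm d) * X"
    by (simp add: algebra_simps)
  then have "c / 2 * X \<le> \<Lambda> * enorm d"
  proof (cases "X = 0")
    case False
    with \<open>0 \<le> X\<close> have "0 < X" by simp
    with \<open>(c / 2 * X) * X \<le> (\<Lambda> * enorm d) * X\<close> show ?thesis
      by (rule mult_right_le_imp_le)
  qed (use \<open>0 < \<Lambda>\<close> enorm_nonneg[of d] in simp)
  then have "c * X \<le> 2 * (\<Lambda> * enorm d)"
    by linarith
  then show ?thesis
    by (simp only: X_def \<Lambda>_def mult.assoc)
qed

lemma direction_energy_bound: "(1 / \<tau> + \<alpha>) * enorm d \<le> (H_bound + c) * enorm \<xi>"
proof -
  define X where "X = enorm \<xi>"
  define D where "D = enorm d"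
  have "0 \<le> X" "0 \<le> D"
    by (simp_all add: X_def D_def enorm_nonneg)
  have "dot (op (\<lambda>_. 1 / \<tau> + \<alpha>) d) d = dot (Kop d) d + (1 / \<tau> + \<alpha>) * dot d d"
    unfolding dot_op by (simp add: dot_def sum_distrib_left mult_ac)
  then have "(1 / \<tau> + \<alpha>) * D * D \<le> dot (op (\<lambda>_. 1 / \<tau> + \<alpha>) d) d"
    using dot_Kop_nonneg[of d] by (simp add: dot_self D_def power2_eq_square)
  also have "\<dots> = dot (Hop \<xi>) d + dot r d"
    by (simp add: dot_Hop_xi)
  also have "\<dots> \<le> H_bound * X * D + c * X * D"
  proof (rule add_mono)
    have "dot (Hop \<xi>) d \<le> enorm (Hop \<xi>) * D"
      using abs_dot_le[of "Hop \<xi>" d] by (simp add: D_def)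
    also have "\<dots> \<le> H_bound * X * D"
      using enorm_op_le[of hess_diag \<xi>] \<open>0 \<le> D\<close> \<open>0 \<le> X\<close>
      by (intro mult_right_mono) (simp_all add: H_bound_def X_def algebra_simps)
    finally show "dot (Hop \<xi>) d \<le> H_bound * X * D" .
    have "residual_tol * X \<le> c * X"
      using residual_tol_le residual_tol_pos \<open>0 \<le> X\<close> by (intro mult_right_mono) auto
    then have "enorm r \<le> c * X"
      using residual_le by (simp add: X_def)
    then have "enorm r * D \<le> c * X * D"
      using \<open>0 \<le> D\<close> by (rule mult_right_mono)
    then show "dot r d \<le> c * X * D"
      using abs_dot_le[of r d] by (simp add: D_def)
  qed
  finally have "((1 / \<tau> + \<alpha>) * D) * D \<le> ((H_bound + c) * X) * D"
    by (simp add: algebra_simps)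
  then show ?thesis
  proof (cases "D = 0")
    case False
    with \<open>0 \<le> D\<close> have "0 < D" by simp
    with \<open>((1 / \<tau> + \<alpha>) * D) * D \<le> ((H_bound + c) * X) * D\<close> show ?thesis
      unfolding X_def D_def by (rule mult_right_le_imp_le)
  qed (use \<open>0 \<le> X\<close> H_bound_ge_1 c_pos in \<open>simp add: X_def D_def\<close>)
qed

lemma direction_upper_bound: "enorm d \<le> 2 * (\<tau> / (1 + \<tau>)) * (H_bound + c) * enorm \<xi>"
proof -
  have "0 < 1 / \<tau> + \<alpha>"
    using tau_pos alpha_ge_half by (simp add: add_pos_nonneg)
  then have "enorm d = 1 / (1 / \<tau> + \<alpha>) * ((1 / \<tau> + \<alpha>) * enorm d)"
    by simp
  also have "\<dots> \<le> 2 * (\<tau> / (1 + \<tau>)) * ((H_bound + c) * enorm \<xi>)"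
    using inverse_shift_le[OF tau_pos alpha_ge_half] direction_energy_bound \<open>0 < 1 / \<tau> + \<alpha>\<close> tau_pos
    by (rule_tac mult_mono) (auto simp: enorm_nonneg)
  finally show ?thesis
    by (simp add: mult_ac)
qed

lemma residual_pairing_le: "2 * dot r d \<le> (1 + 2 / \<tau>) / 2 * (enorm d)\<^sup>2"
proof -
  define D where "D = enorm d"
  have "0 \<le> D"
    by (simp add: D_def enorm_nonneg)
  have "2 * (1 / \<tau> + \<alpha> + K_bound) * D \<le> 2 * (A_bound * (1 + 2 / \<tau>)) * D"
    unfolding A_bound_def using shift_le_margin[OF tau_pos alpha_ge_half K_bound_nonneg] \<open>0 \<le> D\<close>
    by (intro mult_right_mono mult_left_mono) auto
  then have "c * enorm \<xi> \<le> 2 * (A_bound * (1 + 2 / \<tau>)) * D"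
    using direction_lower_bound by (simp add: D_def)
  have "dot r d \<le> enorm r * D"
    using abs_dot_le[of r d] by (simp add: D_def)
  also have "\<dots> \<le> residual_tol * enorm \<xi> * D"
    using residual_le \<open>0 \<le> D\<close> by (simp add: mult_right_mono)
  finally have "2 * dot r d \<le> (c * enorm \<xi>) * D / (4 * A_bound)"
    by (simp add: residual_tol_def)
  also have "\<dots> \<le> (2 * (A_bound * (1 + 2 / \<tau>)) * D) * D / (4 * A_bound)"
    using \<open>c * enorm \<xi> \<le> _\<close> \<open>0 \<le> D\<close> A_bound_ge_1
    by (intro divide_right_mono mult_right_mono) auto
  also have "\<dots> = (1 + 2 / \<tau>) / 2 * D\<^sup>2"
    using A_bound_ge_1 by (simp add: power2_eq_square)
  finally show ?thesis
    by (simp add: D_def)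
qed

lemma hessian_energy_le: "kappa * (\<tau> / (1 + \<tau>)) * dot (Hop \<xi>) \<xi> \<le> (1 + 2 / \<tau>) / 2 * (enorm d)\<^sup>2"
proof -
  define X where "X = enorm \<xi>"
  define \<Lambda> where "\<Lambda> = 1 / \<tau> + \<alpha> + K_bound"
  define s where "s = \<tau> / (1 + \<tau>)"
  have "0 \<le> X" "0 < s"
    using tau_pos by (simp_all add: X_def s_def enorm_nonneg)
  have "0 \<le> dot (Hop \<xi>) \<xi>"
    using Hop_coercive[OF xi_tangent] c_pos by (smt (verit) mult_nonneg_nonneg zero_le_power2)
  have "dot (Hop \<xi>) \<xi> \<le> H_bound * X\<^sup>2"
    using dot_op_le[of hess_diag \<xi>] mult_right_mono[of "op_bound hess_diag" H_bound "X\<^sup>2"]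
    by (simp add: X_def H_bound_def)
  then have "kappa * s * dot (Hop \<xi>) \<xi> \<le> (c\<^sup>2 / (8 * H_bound * A_bound\<^sup>2)) * s * (H_bound * X\<^sup>2)"
    using \<open>0 \<le> dot (Hop \<xi>) \<xi>\<close> \<open>0 < s\<close> kappa_pos H_bound_ge_1 by (intro mult_mono) (auto simp: kappa_def)
  also have "\<dots> = (c * X)\<^sup>2 * s / (8 * A_bound\<^sup>2)"
    using H_bound_ge_1 by (simp add: power_mult_distrib)
  also have "\<dots> \<le> (2 * \<Lambda> * enorm d)\<^sup>2 * s / (8 * A_bound\<^sup>2)"
    using direction_lower_bound c_pos \<open>0 \<le> X\<close> \<open>0 < s\<close>
    by (intro divide_right_mono mult_right_mono power_mono) (auto simp: X_def \<Lambda>_def)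
  also have "\<dots> = (s * \<Lambda>\<^sup>2) * (enorm d)\<^sup>2 / (2 * A_bound\<^sup>2)"
    by (simp add: power_mult_distrib)
  also have "\<dots> \<le> (A_bound\<^sup>2 * (1 + 2 / \<tau>)) * (enorm d)\<^sup>2 / (2 * A_bound\<^sup>2)"
    using shift_sq_le_margin[OF tau_pos alpha_ge_half K_bound_nonneg]
    by (intro divide_right_mono mult_right_mono) (auto simp: s_def \<Lambda>_def A_bound_def)
  also have "\<dots> = (1 + 2 / \<tau>) / 2 * (enorm d)\<^sup>2"
    using A_bound_ge_1 by simp
  finally show ?thesis
    by (simp add: s_def)
qed

lemma linearized_decay:
  "dot (Hop (\<lambda>j. \<xi> j - proj d j)) (\<lambda>j. \<xi> j - proj d j) \<le> (1 - kappa * (\<tau> / (1 + \<tau>))) * dot (Hop \<xi>) \<xi>"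
proof -
  have "dot (Hop (\<lambda>j. \<xi> j - proj d j)) (\<lambda>j. \<xi> j - proj d j)
      = dot (Hop \<xi>) \<xi> - 2 * dot (op (\<lambda>_. 1 / \<tau> + \<alpha>) d) d + 2 * dot r d + dot (Hop d) d
        + (p - 1) * lam * (h * dot w d)\<^sup>2 / h"
    using energy_identity[OF xi_tangent, of d] by (simp add: dot_Hop_xi)
  also have "\<dots> \<le> dot (Hop \<xi>) \<xi> - (1 + 2 / \<tau>) / 2 * (enorm d)\<^sup>2"
  proof -
    define T where "T = 1 + 2 / \<tau>"
    show ?thesis
      using step_margin[OF tau_pos, of d] residual_pairing_le unfolding T_def[symmetric] by linarith
  qed
  also have "\<dots> \<le> (1 - kappa * (\<tau> / (1 + \<tau>))) * dot (Hop \<xi>) \<xi>"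
    using hessian_energy_le by (simp add: algebra_simps)
  finally show ?thesis .
qed

end


section \<open>Normalisation and convergence of the iteration\<close>

lemma qmass_cong: "(\<And>j. j < M \<Longrightarrow> u j = v j) \<Longrightarrow> qmass u = qmass v"
  by (simp add: qmass_def)

lemma lyap_cong: "(\<And>j. j < M \<Longrightarrow> u j = v j) \<Longrightarrow> lyap u = lyap v"
proof -
  assume uv: "\<And>j. j < M \<Longrightarrow> u j = v j"
  then have "dot w u = dot w v"
    by (intro dot_cong) auto
  then have "j < M \<Longrightarrow> proj u j = proj v j" for j
    using uv by (simp add: proj_def)
  then show ?thesis
    unfolding lyap_def by (intro dot_cong op_cong) auto
qed

lemma qmass_lipschitz:
  assumes "\<And>j. j < M \<Longrightarrow> \<bar>u j\<bar> \<le> R" and "\<And>j. j < M \<Longrightarrow> \<bar>v j\<bar> \<le> R"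
  shows "\<bar>qmass u - qmass v\<bar> \<le> h * (p + 1) * R powr p * real M * enorm (\<lambda>j. u j - v j)"
proof -
  have "\<bar>qmass u - qmass v\<bar> = h * \<bar>\<Sum>j<M. \<bar>u j\<bar> powr (p + 1) - \<bar>v j\<bar> powr (p + 1)\<bar>"
    using h_pos by (simp add: qmass_def sum_subtractf abs_mult flip: right_diff_distrib)
  also have "\<dots> \<le> h * (\<Sum>j<M. (p + 1) * R powr p * \<bar>u j - v j\<bar>)"
    using h_pos abs_powr_add_one_lipschitz[OF p_gt_1 assms(1,2)]
    by (intro mult_left_mono order_trans[OF sum_abs] sum_mono) auto
  also have "\<dots> = h * ((p + 1) * R powr p * (\<Sum>j<M. \<bar>u j - v j\<bar>))"
    by (simp add: sum_distrib_left)
  also have "\<dots> \<le> h * ((p + 1) * R powr p * (real M * enorm (\<lambda>j. u j - v j)))"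
    using h_pos p_gt_1 sum_abs_le_enorm[of "\<lambda>j. u j - v j"] by (intro mult_left_mono) auto
  finally show ?thesis
    by (simp add: mult_ac)
qed

lemma normalization_bounds:
  assumes defect: "\<bar>qmass ut - 1\<bar> \<le> \<delta>" and "\<delta> \<le> 1/2"
    and u': "\<And>j. j < M \<Longrightarrow> u' j = ut j / qmass ut powr (1 / (p + 1))"
  shows "qmass u' = 1" and "lyap u' \<le> lyap ut / (1 - \<delta>)\<^sup>2"
    and "deviation u' \<le> 2 * deviation ut + 2 * \<delta> * enorm us"
proof -
  define n where "n = qmass ut powr (1 / (p + 1))"
  have n_bounds: "1 - \<delta> \<le> n" "n \<le> 1 + \<delta>"
    using powr_inverse_near_one[of "p + 1" \<delta> "qmass ut"] p_gt_1 assms(1,2) by (simp_all add: n_def)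
  have "0 < qmass ut" "0 < n" "1 / n \<le> 2"
    using defect n_bounds \<open>\<delta> \<le> 1/2\<close> by (simp_all add: divide_le_eq)
  have u'_n: "j < M \<Longrightarrow> u' j = (1 / n) * ut j" for j
    by (simp add: u' n_def)
  have "qmass u' = qmass ut / n powr (p + 1)"
    using \<open>0 < n\<close> by (simp add: qmass_def u'_n abs_mult powr_mult powr_divide flip: sum_divide_distrib)
  also have "n powr (p + 1) = qmass ut"
    using \<open>0 < qmass ut\<close> p_gt_1 by (simp add: n_def powr_powr)
  finally show "qmass u' = 1"
    using \<open>0 < qmass ut\<close> by simp
  have "lyap u' = lyap (\<lambda>j. (1 / n) * ut j)"
    by (rule lyap_cong) (simp add: u'_n)
  also have "\<dots> = lyap ut / n\<^sup>2"
    by (simp only: lyap_scale) (simp add: power_one_over)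
  also have "\<dots> \<le> lyap ut / (1 - \<delta>)\<^sup>2"
    using n_bounds \<open>\<delta> \<le> 1/2\<close> lyap_nonneg[of ut] by (intro divide_left_mono power_mono mult_pos_pos) auto
  finally show "lyap u' \<le> lyap ut / (1 - \<delta>)\<^sup>2" .
  have "deviation u' = enorm (\<lambda>j. (1 / n) * (ut j - us j) + ((1 - n) / n) * us j)"
    unfolding deviation_def using \<open>0 < n\<close> by (intro enorm_cong) (simp add: u'_n field_simps)
  also have "\<dots> \<le> (1 / n) * deviation ut + (\<bar>1 - n\<bar> * (1 / n)) * enorm us"
    using enorm_add_le[of "\<lambda>j. (1 / n) * (ut j - us j)" "\<lambda>j. ((1 - n) / n) * us j"] \<open>0 < n\<close>
    by (simp only: enorm_scale deviation_def) simp
  also have "\<dots> \<le> 2 * deviation ut + (\<delta> * 2) * enorm us"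
    using \<open>1 / n \<le> 2\<close> n_bounds \<open>0 < n\<close> deviation_nonneg[of ut] enorm_nonneg[of us]
    by (intro add_mono mult_mono mult_right_mono) auto
  finally show "deviation u' \<le> 2 * deviation ut + 2 * \<delta> * enorm us"
    by (simp add: mult_ac)
qed

lemma eventually_deviation_le_proj: "eventually (\<lambda>u. deviation u \<le> 2 * enorm (proj u)) near_ground"
proof -
  have "0 < 1 / (2 * (enorm us + 1))"
    using enorm_nonneg[of us] by (simp add: add_nonneg_pos)
  from landau_o.smallD[OF normal_part_smallo this] show ?thesis
  proof eventually_elim
    case (elim u)
    have "deviation u \<le> enorm (proj u) + enorm (\<lambda>j. normal_part u * us j)"
      unfolding deviation_def deviation_decomposition by (rule enorm_add_le)
    also have "enorm (\<lambda>j. normal_part u * us j) \<le> deviation u / 2"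
    proof -
      have "enorm (\<lambda>j. normal_part u * us j) \<le> deviation u * (enorm us / (2 * (enorm us + 1)))"
        using elim mult_right_mono[OF elim enorm_nonneg[of us]] by (simp add: enorm_scale deviation_nonneg)
      also have "\<dots> \<le> deviation u * (1 / 2)"
        using enorm_nonneg[of us] deviation_nonneg[of u] by (intro mult_left_mono) (simp_all add: field_simps)
      finally show ?thesis
        by simp
    qed
    finally show ?case
      by simp
  qed
qed

definition growth_const :: real where
  "growth_const = 2 * (H_bound + c) * proj_bound"

lemma growth_const_pos: "0 < growth_const"
  using H_bound_ge_1 c_pos proj_bound_pos by (simp add: growth_const_def)

lemma eventually_linear_step_bounds:
  "eventually (\<lambda>u. \<forall>\<tau> ut. 0 < \<tau> \<longrightarrow> (\<forall>j<M. op (\<lambda>_. 1 / \<tau> + \<alpha>) (\<lambda>j. u j - ut j) j = grad u j) \<longrightarrow>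
      lyap ut \<le> (1 - kappa * (\<tau> / (1 + \<tau>))) * lyap u
      \<and> enorm (\<lambda>j. u j - ut j) \<le> \<tau> / (1 + \<tau>) * growth_const * deviation u) near_ground"
proof -
  have "0 < residual_tol / 2"
    using residual_tol_pos by simp
  from landau_o.smallD[OF grad_residual_smallo this] eventually_deviation_le_proj
  show ?thesis
  proof eventually_elim
    case (elim u)
    define r where "r j = grad u j - Hop (proj u) j" for j
    have "enorm r \<le> residual_tol / 2 * deviation u"
      using elim(1) by (simp add: r_def[abs_def] enorm_nonneg deviation_nonneg)
    also have "\<dots> \<le> residual_tol * enorm (proj u)"
      using elim(2) residual_tol_pos by (simp add: mult_left_mono[of _ _ "residual_tol / 2", simplified])
    finally have r_le: "enorm r \<le> residual_tol * enorm (proj u)" .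
    have "enorm (proj u) \<le> proj_bound * deviation u"
      using enorm_proj_le[of "\<lambda>j. u j - us j"] by (simp add: proj_sub_us deviation_def)
    show ?case
    proof (intro allI impI conjI)
      fix \<tau> ut
      define d where "d j = u j - ut j" for j
      assume "0 < \<tau>" and "\<forall>j<M. op (\<lambda>_. 1 / \<tau> + \<alpha>) (\<lambda>j. u j - ut j) j = grad u j"
      then have eq: "\<And>j. j < M \<Longrightarrow> op (\<lambda>_. 1 / \<tau> + \<alpha>) d j = Hop (proj u) j + r j"
        by (simp add: r_def d_def[abs_def])
      have "proj ut = (\<lambda>j. proj u j - proj d j)"
        using proj_diff[of u d] by (simp add: d_def)
      then show "lyap ut \<le> (1 - kappa * (\<tau> / (1 + \<tau>))) * lyap u"
        using linearized_decay[OF \<open>0 < \<tau>\<close> dot_w_proj eq r_le] by (simp add: lyap_def)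
      have "enorm d \<le> 2 * (\<tau> / (1 + \<tau>)) * (H_bound + c) * enorm (proj u)"
        by (rule direction_upper_bound[OF \<open>0 < \<tau>\<close> dot_w_proj eq r_le])
      also have "\<dots> \<le> 2 * (\<tau> / (1 + \<tau>)) * (H_bound + c) * (proj_bound * deviation u)"
        using \<open>enorm (proj u) \<le> proj_bound * deviation u\<close> \<open>0 < \<tau>\<close> H_bound_ge_1 c_pos
        by (intro mult_left_mono) auto
      finally show "enorm (\<lambda>j. u j - ut j) \<le> \<tau> / (1 + \<tau>) * growth_const * deviation u"
        by (simp add: growth_const_def d_def[abs_def] mult_ac)
    qed
  qed
qed

lemma eventually_qmass_defect:
  "\<exists>L>0. eventually (\<lambda>u. \<forall>ut. enorm (\<lambda>j. u j - ut j) \<le> growth_const * deviation u \<longrightarrow>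
     \<bar>qmass ut - 1\<bar> \<le> L * enorm (\<lambda>j. u j - ut j)) near_ground"
proof -
  define R where "R = enorm us + 1 + growth_const"
  define L where "L = h * (p + 1) * R powr p * real M"
  have "0 < L"
    using growth_const_pos enorm_nonneg[of us] h_pos p_gt_1 M_pos by (simp add: R_def L_def)
  have "eventually (\<lambda>u. \<forall>ut. enorm (\<lambda>j. u j - ut j) \<le> growth_const * deviation u \<longrightarrow>
     \<bar>qmass ut - 1\<bar> \<le> L * enorm (\<lambda>j. u j - ut j)) near_ground"
    using eventually_qmass_near_ground eventually_deviation_less[OF zero_less_one]
  proof eventually_elim
    case (elim u)
    show ?case
    proof (intro allI impI)
      fix ut
      assume d_le: "enorm (\<lambda>j. u j - ut j) \<le> growth_const * deviation u"
      have "growth_const * deviation u \<le> growth_const"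
        using elim(2) growth_const_pos mult_left_mono[of "deviation u" 1 growth_const] by simp
      have "\<bar>u j\<bar> \<le> R \<and> \<bar>ut j\<bar> \<le> R" if "j < M" for j
        using abs_le_enorm[OF that, of us] abs_le_deviation[OF that, of u]
          abs_le_enorm[OF that, of "\<lambda>j. u j - ut j"] d_le elim(2) \<open>growth_const * deviation u \<le> growth_const\<close>
        by (simp add: R_def) linarith
      then have "\<bar>qmass u - qmass ut\<bar> \<le> L * enorm (\<lambda>j. u j - ut j)"
        unfolding L_def by (intro qmass_lipschitz) auto
      then show "\<bar>qmass ut - 1\<bar> \<le> L * enorm (\<lambda>j. u j - ut j)"
        using elim(1) by (simp add: abs_minus_commute)
    qed
  qed
  with \<open>0 < L\<close> show ?thesis
    by blast
qed

definition gfalm_step :: "real \<Rightarrow> (nat \<Rightarrow> real) \<Rightarrow> (nat \<Rightarrow> real) \<Rightarrow> (nat \<Rightarrow> real) \<Rightarrow> bool" where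
  "gfalm_step \<tau> u ut u' \<longleftrightarrow>
     (\<forall>j<M. op (\<lambda>_. 1 / \<tau> + \<alpha>) (\<lambda>j. u j - ut j) j = grad u j
        \<and> u' j = ut j / qmass ut powr (1 / (p + 1)))"

lemma deviation_after_step_le:
  assumes "deviation u' \<le> 2 * deviation ut + 2 * (L * enorm (\<lambda>j. u j - ut j)) * enorm us"
    and "enorm (\<lambda>j. u j - ut j) \<le> growth_const * deviation u" and "0 \<le> L"
  shows "deviation u' \<le> (2 * (1 + growth_const) + 2 * L * growth_const * enorm us) * deviation u"
proof -
  have "deviation ut \<le> deviation u + enorm (\<lambda>j. u j - ut j)"
    using enorm_diff_le[of "\<lambda>j. u j - us j" "\<lambda>j. u j - ut j"] by (simp add: deviation_def)
  then have "2 * deviation ut \<le> 2 * (deviation u + growth_const * deviation u)"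
    using assms(2) by simp
  moreover have "2 * (L * enorm (\<lambda>j. u j - ut j)) * enorm us \<le> 2 * (L * (growth_const * deviation u)) * enorm us"
    using mult_left_mono[OF assms(2,3)] enorm_nonneg[of us] by (intro mult_right_mono) simp_all
  ultimately have "2 * deviation ut + 2 * (L * enorm (\<lambda>j. u j - ut j)) * enorm us
      \<le> 2 * (deviation u + growth_const * deviation u) + 2 * (L * (growth_const * deviation u)) * enorm us"
    by (rule add_mono)
  also have "\<dots> = (2 * (1 + growth_const) + 2 * L * growth_const * enorm us) * deviation u"
    by (simp add: algebra_simps)
  finally show ?thesis
    using assms(1) by linarith
qed

lemma kappa_step_le: "0 < \<tau> \<Longrightarrow> kappa * (\<tau> / (1 + \<tau>)) \<le> 1/2"
  using kappa_le_half kappa_pos mult_mono[OF kappa_le_half, of "\<tau> / (1 + \<tau>)" 1] by simp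

lemma gfalm_step_contracts:
  "\<exists>C>0. eventually (\<lambda>u. \<forall>\<tau> ut u'. 0 < \<tau> \<longrightarrow> gfalm_step \<tau> u ut u' \<longrightarrow>
     qmass u' = 1 \<and> lyap u' \<le> (1 - kappa / 2 * (\<tau> / (1 + \<tau>))) * lyap u \<and> deviation u' \<le> C * deviation u)
     near_ground"
proof -
  obtain L where "0 < L" and defect: "eventually (\<lambda>u. \<forall>ut. enorm (\<lambda>j. u j - ut j) \<le> growth_const * deviation u
      \<longrightarrow> \<bar>qmass ut - 1\<bar> \<le> L * enorm (\<lambda>j. u j - ut j)) near_ground"
    using eventually_qmass_defect by blast
  define \<rho> where "\<rho> = kappa / (4 * L * growth_const)"
  define C where "C = 2 * (1 + growth_const) + 2 * L * growth_const * enorm us"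
  have "0 < \<rho>" "0 < C"
    using \<open>0 < L\<close> growth_const_pos kappa_pos enorm_nonneg[of us] by (simp_all add: \<rho>_def C_def add_pos_nonneg)
  have "eventually (\<lambda>u. \<forall>\<tau> ut u'. 0 < \<tau> \<longrightarrow> gfalm_step \<tau> u ut u' \<longrightarrow>
     qmass u' = 1 \<and> lyap u' \<le> (1 - kappa / 2 * (\<tau> / (1 + \<tau>))) * lyap u \<and> deviation u' \<le> C * deviation u)
     near_ground"
    using eventually_linear_step_bounds defect eventually_deviation_less[OF \<open>0 < \<rho>\<close>]
  proof eventually_elim
    case (elim u)
    show ?case
    proof (intro allI impI)
      fix \<tau> ut u'
      assume "0 < \<tau>" and step: "gfalm_step \<tau> u ut u'"
      define s where "s = \<tau> / (1 + \<tau>)"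
      define D where "D = enorm (\<lambda>j. u j - ut j)"
      have "0 < s" "s \<le> 1"
        using \<open>0 < \<tau>\<close> by (simp_all add: s_def)
      have "\<forall>j<M. op (\<lambda>_. 1 / \<tau> + \<alpha>) (\<lambda>j. u j - ut j) j = grad u j"
        using step by (simp add: gfalm_step_def)
      then have decay: "lyap ut \<le> (1 - kappa * s) * lyap u" and "D \<le> s * growth_const * deviation u"
        using elim(1)[THEN spec[of _ \<tau>], THEN spec[of _ ut]] \<open>0 < \<tau>\<close> by (simp_all add: s_def D_def)
      moreover have "s * (growth_const * deviation u) \<le> growth_const * deviation u"
        using \<open>0 < s\<close> \<open>s \<le> 1\<close> growth_const_pos deviation_nonneg[of u] by (intro mult_left_le_one_le) auto
      ultimately have "D \<le> growth_const * deviation u"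
        by (simp add: mult.assoc)
      then have "\<bar>qmass ut - 1\<bar> \<le> L * D"
        using elim(2) by (simp add: D_def)
      have "L * D \<le> L * (s * growth_const * \<rho>)"
      proof (rule mult_left_mono[OF _ less_imp_le[OF \<open>0 < L\<close>]])
        have "s * growth_const * deviation u \<le> s * growth_const * \<rho>"
          using elim(3) \<open>0 < s\<close> growth_const_pos by (intro mult_left_mono) auto
        then show "D \<le> s * growth_const * \<rho>"
          using \<open>D \<le> s * growth_const * deviation u\<close> by linarith
      qed
      also have "\<dots> = kappa * s / 4"
        using \<open>0 < L\<close> growth_const_pos by (simp add: \<rho>_def)
      finally have "L * D \<le> kappa * s / 4" .
      have "kappa * s \<le> 1/2"
        using kappa_step_le[OF \<open>0 < \<tau>\<close>] by (simp add: s_def)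
      then have "L * D \<le> 1/2"
        using \<open>L * D \<le> kappa * s / 4\<close> by linarith
      have u': "\<And>j. j < M \<Longrightarrow> u' j = ut j / qmass ut powr (1 / (p + 1))"
        using step by (simp add: gfalm_step_def)
      note normalized = normalization_bounds[OF \<open>\<bar>qmass ut - 1\<bar> \<le> L * D\<close> \<open>L * D \<le> 1/2\<close> u']
      have "lyap u' \<le> (1 - kappa * s / 2) * lyap u"
        using \<open>L * D \<le> kappa * s / 4\<close> \<open>kappa * s \<le> 1/2\<close> \<open>0 < L\<close> enorm_nonneg
        by (intro decay_after_normalization[OF lyap_nonneg decay normalized(2)]) (auto simp: D_def)
      moreover have "deviation u' \<le> C * deviation u"
        using deviation_after_step_le[OF normalized(3)[unfolded D_def] _ less_imp_le[OF \<open>0 < L\<close>]]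
          \<open>D \<le> growth_const * deviation u\<close> by (simp add: C_def D_def)
      moreover have "kappa * s / 2 = kappa / 2 * (\<tau> / (1 + \<tau>))"
        by (simp add: s_def)
      ultimately show "qmass u' = 1 \<and> lyap u' \<le> (1 - kappa / 2 * (\<tau> / (1 + \<tau>))) * lyap u
          \<and> deviation u' \<le> C * deviation u"
        using normalized(1) by metis
    qed
  qed
  with \<open>0 < C\<close> show ?thesis
    by blast
qed

lemma eventually_lyap_lower: "eventually (\<lambda>u. c / 4 * (deviation u)\<^sup>2 \<le> lyap u) near_ground"
  using eventually_deviation_le_proj
proof eventually_elim
  case (elim u)
  have "c / 4 * (deviation u)\<^sup>2 \<le> c / 4 * (2 * enorm (proj u))\<^sup>2"
    using elim c_pos deviation_nonneg[of u] by (intro mult_left_mono power_mono) auto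
  also have "\<dots> = c * (enorm (proj u))\<^sup>2"
    by (simp add: power_mult_distrib)
  also have "\<dots> \<le> lyap u"
    by (rule lyap_lower)
  finally show ?case .
qed

definition lyap_const :: real where
  "lyap_const = 4 * H_bound * proj_bound\<^sup>2 / c"

lemma lyap_const_pos: "0 < lyap_const"
  using H_bound_ge_1 c_pos proj_bound_pos by (simp add: lyap_const_def)

lemma lyap_le_lyap_const: "4 / c * lyap u \<le> lyap_const * (deviation u)\<^sup>2"
proof -
  have "lyap u \<le> H_bound * proj_bound\<^sup>2 * (deviation u)\<^sup>2"
    using lyap_upper[of u] mult_right_mono[of "op_bound hess_diag" H_bound "proj_bound\<^sup>2 * (deviation u)\<^sup>2"]
    by (simp add: H_bound_def mult.assoc)
  then show ?thesis
    using c_pos by (simp add: lyap_const_def field_simps)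
qed

lemma gfalm_trajectory_stays_near:
  assumes "0 < \<rho>'" "\<rho>' \<le> \<rho>" "0 < C" "C * \<rho>' \<le> \<rho>" "0 \<le> q" "q \<le> 1"
    and step: "\<And>u ut u'. qmass u = 1 \<Longrightarrow> deviation u < \<rho> \<Longrightarrow> gfalm_step \<tau> u ut u' \<Longrightarrow>
      qmass u' = 1 \<and> lyap u' \<le> q * lyap u \<and> deviation u' \<le> C * deviation u"
    and lower: "\<And>u. qmass u = 1 \<Longrightarrow> deviation u < \<rho> \<Longrightarrow> c / 4 * (deviation u)\<^sup>2 \<le> lyap u"
    and start: "qmass (u 0) = 1" "deviation (u 0) < \<rho>'" "4 / c * lyap (u 0) < \<rho>'\<^sup>2"
    and steps: "\<forall>n. gfalm_step \<tau> (u n) (ut (Suc n)) (u (Suc n))"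
  shows "qmass (u n) = 1 \<and> deviation (u n) < \<rho>' \<and> lyap (u n) \<le> q ^ n * lyap (u 0)"
proof (induction n)
  case 0
  then show ?case
    using start by simp
next
  case (Suc n)
  then have "deviation (u n) < \<rho>"
    using \<open>\<rho>' \<le> \<rho>\<close> by simp
  with Suc.IH have next_step: "qmass (u (Suc n)) = 1" "lyap (u (Suc n)) \<le> q * lyap (u n)"
      "deviation (u (Suc n)) \<le> C * deviation (u n)"
    using step steps by blast+
  have lyap_Suc: "lyap (u (Suc n)) \<le> q ^ Suc n * lyap (u 0)"
    using next_step(2) mult_left_mono[of "lyap (u n)" "q ^ n * lyap (u 0)" q] Suc.IH \<open>0 \<le> q\<close>
    by (simp add: mult.assoc)
  have "C * deviation (u n) < C * \<rho>'"
    using Suc.IH \<open>0 < C\<close> by simp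
  then have "deviation (u (Suc n)) < \<rho>"
    using next_step(3) \<open>C * \<rho>' \<le> \<rho>\<close> by linarith
  then have "c / 4 * (deviation (u (Suc n)))\<^sup>2 \<le> q ^ Suc n * lyap (u 0)"
    using lower[OF next_step(1)] lyap_Suc by linarith
  also have "\<dots> \<le> lyap (u 0)"
    using lyap_nonneg[of "u 0"] \<open>0 \<le> q\<close> \<open>q \<le> 1\<close>
    by (intro mult_left_le_one_le zero_le_power power_le_one)
  finally have "c * (deviation (u (Suc n)))\<^sup>2 \<le> 4 * lyap (u 0)"
    by simp
  moreover have "4 * lyap (u 0) < c * \<rho>'\<^sup>2"
    using start(3) c_pos by (simp add: field_simps)
  ultimately have "(deviation (u (Suc n)))\<^sup>2 < \<rho>'\<^sup>2"
    using mult_less_cancel_left_pos[OF c_pos] by fastforce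
  then have "deviation (u (Suc n)) < \<rho>'"
    using \<open>0 < \<rho>'\<close> by (simp add: power_less_imp_less_base)
  with next_step(1) lyap_Suc show ?case
    by simp
qed

lemma gfalm_trajectory_invariant:
  "\<exists>\<delta>>0. \<forall>\<tau> u ut. 0 < \<tau> \<longrightarrow> qmass (u 0) = 1 \<longrightarrow> deviation (u 0) \<le> \<delta> \<longrightarrow>
     (\<forall>n. gfalm_step \<tau> (u n) (ut (Suc n)) (u (Suc n))) \<longrightarrow>
     (\<forall>n. c / 4 * (deviation (u n))\<^sup>2 \<le> lyap (u n)
        \<and> lyap (u n) \<le> (1 - kappa / 2 * (\<tau> / (1 + \<tau>))) ^ n * lyap (u 0))"
proof -
  obtain C where "0 < C" and contracts: "eventually (\<lambda>u. \<forall>\<tau> ut u'. 0 < \<tau> \<longrightarrow> gfalm_step \<tau> u ut u' \<longrightarrow>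
      qmass u' = 1 \<and> lyap u' \<le> (1 - kappa / 2 * (\<tau> / (1 + \<tau>))) * lyap u \<and> deviation u' \<le> C * deviation u)
      near_ground"
    using gfalm_step_contracts by blast
  from eventually_conj[OF contracts eventually_lyap_lower] obtain \<rho> where "0 < \<rho>"
    and step: "\<And>u \<tau> ut u'. qmass u = 1 \<Longrightarrow> deviation u < \<rho> \<Longrightarrow> 0 < \<tau> \<Longrightarrow> gfalm_step \<tau> u ut u' \<Longrightarrow>
      qmass u' = 1 \<and> lyap u' \<le> (1 - kappa / 2 * (\<tau> / (1 + \<tau>))) * lyap u \<and> deviation u' \<le> C * deviation u"
    and lower: "\<And>u. qmass u = 1 \<Longrightarrow> deviation u < \<rho> \<Longrightarrow> c / 4 * (deviation u)\<^sup>2 \<le> lyap u"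
    unfolding eventually_near_ground by blast
  define \<rho>' where "\<rho>' = min \<rho> (\<rho> / C)"
  define \<delta> where "\<delta> = \<rho>' / (2 * (1 + lyap_const))"
  have "0 < \<rho>'" "\<rho>' \<le> \<rho>" "C * \<rho>' \<le> \<rho>"
    using \<open>0 < \<rho>\<close> \<open>0 < C\<close> by (auto simp: \<rho>'_def min_def field_simps)
  have "0 < \<delta>" "\<delta> < \<rho>'"
    using \<open>0 < \<rho>'\<close> lyap_const_pos by (simp_all add: \<delta>_def field_simps add_pos_pos)
  have "lyap_const * \<delta>\<^sup>2 < \<rho>'\<^sup>2"
  proof -
    have "lyap_const < (2 * (1 + lyap_const))\<^sup>2"
      using lyap_const_pos by (simp add: power2_eq_square algebra_simps) (smt (verit) mult_pos_pos)
    then show ?thesis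
      using \<open>0 < \<rho>'\<close> lyap_const_pos by (simp add: \<delta>_def field_simps)
  qed
  show ?thesis
  proof (rule exI[of _ \<delta>], rule conjI[OF \<open>0 < \<delta>\<close>], intro allI impI)
    fix \<tau> m and u ut :: "nat \<Rightarrow> nat \<Rightarrow> real"
    assume "0 < \<tau>" and "qmass (u 0) = 1" and "deviation (u 0) \<le> \<delta>"
      and steps: "\<forall>n. gfalm_step \<tau> (u n) (ut (Suc n)) (u (Suc n))"
    have q_bounds: "0 \<le> 1 - kappa / 2 * (\<tau> / (1 + \<tau>))" "1 - kappa / 2 * (\<tau> / (1 + \<tau>)) \<le> 1"
      using kappa_step_le[OF \<open>0 < \<tau>\<close>] kappa_pos \<open>0 < \<tau>\<close> by simp_all
    have "4 / c * lyap (u 0) \<le> lyap_const * (deviation (u 0))\<^sup>2"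
      by (rule lyap_le_lyap_const)
    also have "\<dots> \<le> lyap_const * \<delta>\<^sup>2"
      using \<open>deviation (u 0) \<le> \<delta>\<close> deviation_nonneg[of "u 0"] lyap_const_pos
      by (intro mult_left_mono power_mono) auto
    also have "\<dots> < \<rho>'\<^sup>2"
      by (fact \<open>lyap_const * \<delta>\<^sup>2 < \<rho>'\<^sup>2\<close>)
    finally have lyap_start: "4 / c * lyap (u 0) < \<rho>'\<^sup>2" .
    have dev_start: "deviation (u 0) < \<rho>'"
      using \<open>deviation (u 0) \<le> \<delta>\<close> \<open>\<delta> < \<rho>'\<close> by simp
    have "qmass (u m) = 1 \<and> deviation (u m) < \<rho>'
        \<and> lyap (u m) \<le> (1 - kappa / 2 * (\<tau> / (1 + \<tau>))) ^ m * lyap (u 0)"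
      by (rule gfalm_trajectory_stays_near[OF \<open>0 < \<rho>'\<close> \<open>\<rho>' \<le> \<rho>\<close> \<open>0 < C\<close> \<open>C * \<rho>' \<le> \<rho>\<close> q_bounds
            step[OF _ _ \<open>0 < \<tau>\<close>] lower \<open>qmass (u 0) = 1\<close> dev_start lyap_start steps])
    then show "c / 4 * (deviation (u m))\<^sup>2 \<le> lyap (u m)
        \<and> lyap (u m) \<le> (1 - kappa / 2 * (\<tau> / (1 + \<tau>))) ^ m * lyap (u 0)"
      using lower[of "u m"] \<open>\<rho>' \<le> \<rho>\<close> by simp
  qed
qed

lemma gfalm_converges:
  "\<exists>\<delta>>0. \<exists>C>0. \<exists>a>0. \<forall>\<tau> u ut. 0 < \<tau> \<longrightarrow> qmass (u 0) = 1 \<longrightarrow> deviation (u 0) \<le> \<delta> \<longrightarrow>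
     (\<forall>n. gfalm_step \<tau> (u n) (ut (Suc n)) (u (Suc n))) \<longrightarrow>
     (\<forall>n. deviation (u n) \<le> C * exp (- a * real n * \<tau> / (1 + \<tau>)))"
proof -
  obtain \<delta> where "0 < \<delta>" and traj: "\<forall>\<tau> u ut. 0 < \<tau> \<longrightarrow> qmass (u 0) = 1 \<longrightarrow> deviation (u 0) \<le> \<delta> \<longrightarrow>
      (\<forall>n. gfalm_step \<tau> (u n) (ut (Suc n)) (u (Suc n))) \<longrightarrow>
      (\<forall>n. c / 4 * (deviation (u n))\<^sup>2 \<le> lyap (u n)
        \<and> lyap (u n) \<le> (1 - kappa / 2 * (\<tau> / (1 + \<tau>))) ^ n * lyap (u 0))"
    using gfalm_trajectory_invariant by blast
  define C where "C = sqrt lyap_const * \<delta> + 1"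
  have "0 < C" "0 < kappa / 4"
    using lyap_const_pos \<open>0 < \<delta>\<close> kappa_pos by (simp_all add: C_def add_pos_nonneg)
  show ?thesis
  proof (rule exI[of _ \<delta>], rule conjI[OF \<open>0 < \<delta>\<close>], rule exI[of _ C], rule conjI[OF \<open>0 < C\<close>],
      rule exI[of _ "kappa / 4"], rule conjI[OF \<open>0 < kappa / 4\<close>], intro allI impI)
    fix \<tau> n and u ut :: "nat \<Rightarrow> nat \<Rightarrow> real"
    assume "0 < \<tau>" and start: "qmass (u 0) = 1" "deviation (u 0) \<le> \<delta>"
      and steps: "\<forall>n. gfalm_step \<tau> (u n) (ut (Suc n)) (u (Suc n))"
    define E where "E = exp (- (kappa / 4) * real n * \<tau> / (1 + \<tau>))"
    have decay: "(1 - kappa / 2 * (\<tau> / (1 + \<tau>))) ^ n \<le> E\<^sup>2"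
      unfolding E_def using \<open>0 < \<tau>\<close> kappa_pos kappa_le_half by (intro power_decay_le_exp_sq) auto
    have "\<forall>n. c / 4 * (deviation (u n))\<^sup>2 \<le> lyap (u n)
        \<and> lyap (u n) \<le> (1 - kappa / 2 * (\<tau> / (1 + \<tau>))) ^ n * lyap (u 0)"
      using traj[THEN spec[of _ \<tau>], THEN spec[of _ u], THEN spec[of _ ut]] \<open>0 < \<tau>\<close> start steps by simp
    then have "c / 4 * (deviation (u n))\<^sup>2 \<le> lyap (u n)"
      and "lyap (u n) \<le> (1 - kappa / 2 * (\<tau> / (1 + \<tau>))) ^ n * lyap (u 0)"
      by simp_all
    then have "c / 4 * (deviation (u n))\<^sup>2 \<le> E\<^sup>2 * lyap (u 0)"
      using mult_right_mono[OF decay lyap_nonneg[of "u 0"]] by linarith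
    then have "(deviation (u n))\<^sup>2 \<le> 4 / c * (E\<^sup>2 * lyap (u 0))"
      using c_pos mult_left_mono[of "c / 4 * (deviation (u n))\<^sup>2" "E\<^sup>2 * lyap (u 0)" "4 / c"] by simp
    also have "\<dots> = E\<^sup>2 * (4 / c * lyap (u 0))"
      by (simp add: mult_ac)
    also have "\<dots> \<le> E\<^sup>2 * (lyap_const * \<delta>\<^sup>2)"
    proof (rule mult_left_mono)
      have "4 / c * lyap (u 0) \<le> lyap_const * (deviation (u 0))\<^sup>2"
        by (rule lyap_le_lyap_const)
      also have "\<dots> \<le> lyap_const * \<delta>\<^sup>2"
        using start(2) deviation_nonneg[of "u 0"] lyap_const_pos by (intro mult_left_mono power_mono) auto
      finally show "4 / c * lyap (u 0) \<le> lyap_const * \<delta>\<^sup>2" .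
    qed simp
    also have "\<dots> = (sqrt lyap_const * \<delta> * E)\<^sup>2"
      using lyap_const_pos by (simp add: power_mult_distrib)
    finally have "deviation (u n) \<le> sqrt lyap_const * \<delta> * E"
      by (rule power2_le_imp_le) (use lyap_const_pos \<open>0 < \<delta>\<close> in \<open>simp add: E_def\<close>)
    also have "\<dots> \<le> C * E"
      by (rule mult_right_mono) (simp_all add: C_def E_def)
    finally show "deviation (u n) \<le> C * exp (- (kappa / 4) * real n * \<tau> / (1 + \<tau>))"
      by (simp only: E_def)
  qed
qed

end

section \<open>The pseudospectral second derivative\<close>

lemma exp_linear_has_vector_derivative:
  fixes a b :: real
  shows "((\<lambda>y. exp (\<i> * of_real (a * (y - b)))) has_vector_derivative
           (\<i> * of_real a) * exp (\<i> * of_real (a * (y - b)))) (at y)"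
proof -
  have "((\<lambda>y. \<i> * of_real (a * (y - b))) has_vector_derivative \<i> * of_real a) (at y)"
    by (auto intro!: derivative_eq_intros)
  then have "((exp \<circ> (\<lambda>y. \<i> * of_real (a * (y - b)))) has_vector_derivative
           (\<i> * of_real a) * exp (\<i> * of_real (a * (y - b)))) (at y)"
    by (rule field_vector_diff_chain_at) (auto intro!: derivative_eq_intros)
  then show ?thesis
    by (simp add: o_def)
qed

lemma phi_has_vector_derivative:
  "(phi x0 L M l has_vector_derivative
     (1 / of_nat M) * (\<Sum>k\<in>{-(int M div 2)..int M div 2}. of_real (1 / acoef M k) *
        ((\<i> * of_real (real_of_int k * sigma L)) * exp (\<i> * of_real (real_of_int k * sigma L * (y - xgrid x0 L M l))))))
   (at y)"
  unfolding phi_def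
  by (intro has_vector_derivative_mult_right has_vector_derivative_sum exp_linear_has_vector_derivative)

lemma phi_derivative_has_vector_derivative:
  "((\<lambda>y. vector_derivative (phi x0 L M l) (at y)) has_vector_derivative
     (1 / of_nat M) * (\<Sum>k\<in>{-(int M div 2)..int M div 2}. of_real (1 / acoef M k) *
        ((\<i> * of_real (real_of_int k * sigma L)) * ((\<i> * of_real (real_of_int k * sigma L)) *
          exp (\<i> * of_real (real_of_int k * sigma L * (y - xgrid x0 L M l)))))))
   (at y)"
proof -
  have "(\<lambda>y. vector_derivative (phi x0 L M l) (at y)) = (\<lambda>y. (1 / of_nat M) *
      (\<Sum>k\<in>{-(int M div 2)..int M div 2}. of_real (1 / acoef M k) *
        ((\<i> * of_real (real_of_int k * sigma L)) * exp (\<i> * of_real (real_of_int k * sigma L * (y - xgrid x0 L M l))))))"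
    by (rule ext, rule vector_derivative_at[OF phi_has_vector_derivative])
  then show ?thesis
    by (simp only:) (intro has_vector_derivative_mult_right has_vector_derivative_sum exp_linear_has_vector_derivative)
qed

lemma Dxx_eq_cos_sum:
  "Dxx x0 L M j l = - (1 / real M) * (\<Sum>k\<in>{-(int M div 2)..int M div 2}.
      (1 / acoef M k) * (real_of_int k * sigma L)\<^sup>2 * cos (real_of_int k * sigma L * (xgrid x0 L M j - xgrid x0 L M l)))"
  unfolding Dxx_def vector_derivative_at[OF phi_derivative_has_vector_derivative]
  by (simp add: sum_negf power2_eq_square Re_exp cos_of_real algebra_simps flip: sum_distrib_left)

lemma Dxx_symmetric: "Dxx x0 L M j l = Dxx x0 L M l j"
proof -
  have "cos (t * (a - b)) = cos (t * (b - a))" for t a b :: real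
    by (metis cos_minus minus_diff_eq mult_minus_right)
  then show ?thesis
    unfolding Dxx_eq_cos_sum by simp
qed

lemma double_sum_cos_diff:
  fixes u x :: "nat \<Rightarrow> real"
  shows "(\<Sum>j<M. \<Sum>l<M. u j * u l * cos (t * (x j - x l)))
       = (\<Sum>j<M. u j * cos (t * x j))\<^sup>2 + (\<Sum>j<M. u j * sin (t * x j))\<^sup>2"
proof -
  have "(\<Sum>j<M. \<Sum>l<M. u j * u l * cos (t * (x j - x l)))
      = (\<Sum>j<M. \<Sum>l<M. (u j * cos (t * x j)) * (u l * cos (t * x l)) + (u j * sin (t * x j)) * (u l * sin (t * x l)))"
    by (intro sum.cong refl) (simp add: cos_diff algebra_simps)
  also have "\<dots> = (\<Sum>j<M. u j * cos (t * x j)) * (\<Sum>l<M. u l * cos (t * x l))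
      + (\<Sum>j<M. u j * sin (t * x j)) * (\<Sum>l<M. u l * sin (t * x l))"
    by (simp add: sum.distrib sum_product)
  finally show ?thesis
    by (simp add: power2_eq_square)
qed

lemma neg_half_Dxx_psd: "0 \<le> (\<Sum>j<M. u j * (\<Sum>l<M. (- Dxx x0 L M j l / 2) * u l))"
proof -
  define I where "I = {-(int M div 2)..int M div 2}"
  define a where "a k = (1 / acoef M k) * (real_of_int k * sigma L)\<^sup>2" for k
  define x where "x = xgrid x0 L M"
  have "0 \<le> a k" for k
    by (simp add: a_def acoef_def)
  have D: "- Dxx x0 L M j l / 2 = (1 / (2 * real M)) * (\<Sum>k\<in>I. a k * cos (real_of_int k * sigma L * (x j - x l)))"
    for j l
    unfolding Dxx_eq_cos_sum I_def a_def x_def by (simp add: algebra_simps)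
  have "(\<Sum>j<M. u j * (\<Sum>l<M. (- Dxx x0 L M j l / 2) * u l))
      = (\<Sum>j<M. \<Sum>l<M. \<Sum>k\<in>I. (1 / (2 * real M)) * a k * (u j * u l * cos (real_of_int k * sigma L * (x j - x l))))"
    unfolding D by (simp add: sum_distrib_left sum_distrib_right algebra_simps)
  also have "\<dots> = (\<Sum>j<M. \<Sum>k\<in>I. \<Sum>l<M. (1 / (2 * real M)) * a k * (u j * u l * cos (real_of_int k * sigma L * (x j - x l))))"
    by (intro sum.cong refl sum.swap)
  also have "\<dots> = (\<Sum>k\<in>I. \<Sum>j<M. \<Sum>l<M. (1 / (2 * real M)) * a k * (u j * u l * cos (real_of_int k * sigma L * (x j - x l))))"
    by (rule sum.swap)
  also have "\<dots> = (\<Sum>k\<in>I. (1 / (2 * real M)) * a k * (\<Sum>j<M. \<Sum>l<M. u j * u l * cos (real_of_int k * sigma L * (x j - x l))))"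
    by (simp add: sum_distrib_left)
  also have "\<dots> = (\<Sum>k\<in>I. (1 / (2 * real M)) * a k * ((\<Sum>j<M. u j * cos (real_of_int k * sigma L * x j))\<^sup>2
      + (\<Sum>j<M. u j * sin (real_of_int k * sigma L * x j))\<^sup>2))"
    by (simp only: double_sum_cos_diff)
  also have "0 \<le> \<dots>"
    using \<open>\<And>k. 0 \<le> a k\<close> by (intro sum_nonneg mult_nonneg_nonneg) auto
  finally show ?thesis
    by simp
qed

section \<open>Connection with the fully discrete scheme\<close>

lemma hstep_pos: "0 < L \<Longrightarrow> 0 < M \<Longrightarrow> 0 < hstep L M"
  by (simp add: hstep_def)

lemma xgrid_in_domain: "0 < L \<Longrightarrow> j < M \<Longrightarrow> xgrid x0 L M j \<in> {x0..x0 + L}"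
proof -
  assume "0 < L" "j < M"
  then have "real j * (L / real M) \<le> real M * (L / real M)"
    by (intro mult_right_mono) auto
  with \<open>0 < L\<close> \<open>j < M\<close> show ?thesis
    by (simp add: xgrid_def hstep_def)
qed

lemma norm_h_sq: "0 < hstep L M \<Longrightarrow> (norm_h L M u)\<^sup>2 = hstep L M * (\<Sum>j<M. u j * u j)"
  by (simp add: norm_h_def inner_h_def sum_nonneg)

lemma norm_h_nonneg: "0 < hstep L M \<Longrightarrow> 0 \<le> norm_h L M u"
  by (simp add: norm_h_def inner_h_def sum_nonneg)

lemma semi1_h_sq:
  assumes "0 < hstep L M"
  shows "(semi1_h x0 L M u)\<^sup>2 = 2 * hstep L M * (\<Sum>j<M. u j * (\<Sum>l<M. (- Dxx x0 L M j l / 2) * u l))"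
proof -
  define S where "S = (\<Sum>j<M. u j * (\<Sum>l<M. (- Dxx x0 L M j l / 2) * u l))"
  have "inner_h L M (\<lambda>j. - Dxx_app x0 L M u j) u = 2 * hstep L M * S"
    by (simp add: S_def inner_h_def Dxx_app_def sum_distrib_left sum_distrib_right sum_negf algebra_simps)
  moreover have "0 \<le> S"
    unfolding S_def by (rule neg_half_Dxx_psd)
  ultimately show ?thesis
    using assms by (simp add: semi1_h_def S_def)
qed

lemma A_h_eq_sum:
  "A_h x0 L M V \<omega> u j = (\<Sum>l<M. (- Dxx x0 L M j l / 2) * u l) + (V (xgrid x0 L M j) + \<omega>) * u j"
  by (simp add: A_h_def Dxx_app_def sum_distrib_left sum_negf)

lemma A_h_scale: "A_h x0 L M V \<omega> (\<lambda>j. t * u j) j = t * A_h x0 L M V \<omega> u j"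
  by (simp add: A_h_eq_sum sum_distrib_left algebra_simps)

lemma Q_h_eq_sum:
  assumes "0 < hstep L M"
  shows "Q_h x0 L M V \<omega> u = hstep L M * (\<Sum>j<M. A_h x0 L M V \<omega> u j * u j)"
  unfolding Q_h_def semi1_h_sq[OF assms] norm_h_sq[OF assms] A_h_eq_sum
  by (simp add: sum.distrib sum_distrib_left algebra_simps power2_eq_square)

lemma S_h_normalized:
  assumes "0 < hstep L M" and "1 < p" and "u \<in> S_h L M p"
  shows "hstep L M * (\<Sum>j<M. \<bar>u j\<bar> powr (p + 1)) = 1"
proof (rule eq_1_if_powr_eq_1)
  show "(hstep L M * (\<Sum>j<M. \<bar>u j\<bar> powr (p + 1))) powr (1 / (p + 1)) = 1"
    using assms(3) by (simp add: S_h_def normq_h_def)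
qed (use assms(1,2) in \<open>auto intro!: mult_nonneg_nonneg sum_nonneg\<close>)

lemma lam0'_le_energy:
  assumes "0 < hstep L M" and "\<forall>j<M. 0 \<le> V (xgrid x0 L M j)" and "norm_h L M v = 1"
  shows "lam0' x0 L M V \<le> Q_h x0 L M V \<omega> v - \<omega>"
proof -
  have "lam0' x0 L M V \<le> 1/2 * (semi1_h x0 L M v)\<^sup>2 + hstep L M * (\<Sum>j<M. V (xgrid x0 L M j) * \<bar>v j\<bar>\<^sup>2)"
    unfolding lam0'_def
  proof (rule cInf_lower)
    show "bdd_below {1/2 * (semi1_h x0 L M u)\<^sup>2 + hstep L M * (\<Sum>j<M. V (xgrid x0 L M j) * \<bar>u j\<bar>\<^sup>2)
        | u. norm_h L M u = 1}"
      using assms(1,2) by (intro bdd_belowI[of _ 0]) (auto intro!: add_nonneg_nonneg mult_nonneg_nonneg sum_nonneg)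
  qed (use assms(3) in auto)
  then show ?thesis
    using assms(3) by (simp add: Q_h_def)
qed

lemma discrete_ground_state_multiplier_pos:
  assumes "0 < L" and "0 < M" and "1 < p" and V_nonneg: "\<And>j. j < M \<Longrightarrow> 0 \<le> V (xgrid x0 L M j)"
    and A2': "\<omega> > - lam0' x0 L M V" and gs: "discrete_ground_state x0 L M V \<omega> p us lam"
  shows "0 < lam"
proof -
  define h where "h = hstep L M"
  have "0 < h"
    using assms by (simp add: h_def hstep_pos)
  have normalized: "h * (\<Sum>j<M. \<bar>us j\<bar> powr (p + 1)) = 1"
    using S_h_normalized[of L M p us] gs \<open>0 < h\<close> \<open>1 < p\<close> by (simp add: discrete_ground_state_def h_def)
  have "Q_h x0 L M V \<omega> us = h * (\<Sum>j<M. lam * \<bar>us j\<bar> powr (p + 1))"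
    unfolding Q_h_eq_sum[OF \<open>0 < h\<close>[unfolded h_def]] h_def[symmetric]
    using gs by (simp add: discrete_ground_state_def abs_powr_add_one_eq mult.assoc)
  also have "\<dots> = lam"
    using normalized by (simp flip: sum_distrib_left)
  finally have Q_us: "Q_h x0 L M V \<omega> us = lam" .
  define m where "m = norm_h L M us"
  have "\<exists>j<M. us j \<noteq> 0"
  proof (rule ccontr)
    assume "\<not> (\<exists>j<M. us j \<noteq> 0)"
    then have "(\<Sum>j<M. \<bar>us j\<bar> powr (p + 1)) = 0"
      by simp
    with normalized show False
      by simp
  qed
  then obtain j where "j < M" "0 < us j * us j"
    using not_real_square_gt_zero by blast
  then have "0 < (\<Sum>j<M. us j * us j)"
    by (intro sum_pos2[of _ j]) auto
  have m_sq: "m\<^sup>2 = h * (\<Sum>j<M. us j * us j)"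
    using \<open>0 < h\<close> by (simp add: m_def h_def norm_h_sq)
  have "0 < m\<^sup>2"
    using m_sq \<open>0 < (\<Sum>j<M. us j * us j)\<close> \<open>0 < h\<close> by simp
  moreover have "0 \<le> m"
    using \<open>0 < h\<close> by (simp add: m_def h_def norm_h_nonneg)
  ultimately have "0 < m"
    by (metis less_eq_real_def power_zero_numeral)
  define v where "v j = (1 / m) * us j" for j
  have "(norm_h L M v)\<^sup>2 = (1 / m)\<^sup>2 * (h * (\<Sum>j<M. us j * us j))"
    unfolding norm_h_sq[OF \<open>0 < h\<close>[unfolded h_def]]
    by (simp add: v_def h_def sum_distrib_left power2_eq_square mult_ac)
  also have "\<dots> = 1"
    using \<open>0 < m\<^sup>2\<close> by (simp add: power_divide flip: m_sq)
  finally have "norm_h L M v = 1"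
    using power2_eq_1_iff[of "norm_h L M v"] norm_h_nonneg[of L M v] \<open>0 < h\<close> by (auto simp: h_def)
  have "0 < Q_h x0 L M V \<omega> v"
    using lam0'_le_energy[OF \<open>0 < h\<close>[unfolded h_def] _ \<open>norm_h L M v = 1\<close>, of V x0 \<omega>] V_nonneg A2' by auto
  also have "Q_h x0 L M V \<omega> v = Q_h x0 L M V \<omega> us / m\<^sup>2"
    unfolding Q_h_eq_sum[OF \<open>0 < h\<close>[unfolded h_def]] v_def A_h_scale
    by (simp add: power2_eq_square flip: sum_divide_distrib)
  finally show ?thesis
    using Q_us \<open>0 < m\<close> by (simp add: zero_less_divide_iff)
qed

lemma NDh_imp_coercive:
  assumes "0 < hstep L M" and "NDh x0 L M V \<omega> p us lam"
  shows "\<exists>c>0. \<forall>\<xi>. (\<Sum>j<M. (\<bar>us j\<bar> powr (p - 1) * us j) * \<xi> j) = 0 \<longrightarrow>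
    c * (\<Sum>j<M. \<xi> j * \<xi> j) \<le> (\<Sum>j<M. ((\<Sum>l<M. (- Dxx x0 L M j l / 2) * \<xi> l)
      + (V (xgrid x0 L M j) + \<omega> - p * lam * \<bar>us j\<bar> powr (p - 1)) * \<xi> j) * \<xi> j)"
proof -
  obtain c where "0 < c" and nd: "\<And>\<xi>. \<xi> \<in> tangent_h L M p us \<Longrightarrow>
      c * (norm1_h x0 L M \<xi>)\<^sup>2 \<le> inner_h L M (A_h x0 L M V \<omega> \<xi>) \<xi>
        - p * lam * inner_h L M (\<lambda>j. \<bar>us j\<bar> powr (p - 1) * \<xi> j) \<xi>"
    using assms(2) by (auto simp: NDh_def)
  show ?thesis
  proof (intro exI[of _ c] conjI allI impI)
    fix \<xi> :: "nat \<Rightarrow> real"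
    assume "(\<Sum>j<M. (\<bar>us j\<bar> powr (p - 1) * us j) * \<xi> j) = 0"
    then have "\<xi> \<in> tangent_h L M p us"
      by (simp add: tangent_h_def inner_h_def)
    have "(norm1_h x0 L M \<xi>)\<^sup>2 = (norm_h L M \<xi>)\<^sup>2 + (semi1_h x0 L M \<xi>)\<^sup>2"
      by (simp add: norm1_h_def)
    then have "hstep L M * (\<Sum>j<M. \<xi> j * \<xi> j) \<le> (norm1_h x0 L M \<xi>)\<^sup>2"
      using norm_h_sq[OF assms(1), of \<xi>] by simp
    then have "c * (hstep L M * (\<Sum>j<M. \<xi> j * \<xi> j)) \<le> c * (norm1_h x0 L M \<xi>)\<^sup>2"
      using \<open>0 < c\<close> by simp
    also have "\<dots> \<le> hstep L M * (\<Sum>j<M. ((\<Sum>l<M. (- Dxx x0 L M j l / 2) * \<xi> l)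
      + (V (xgrid x0 L M j) + \<omega> - p * lam * \<bar>us j\<bar> powr (p - 1)) * \<xi> j) * \<xi> j)"
      using nd[OF \<open>\<xi> \<in> tangent_h L M p us\<close>]
      by (simp add: inner_h_def A_h_eq_sum sum_distrib_left sum_subtractf algebra_simps)
    finally show "c * (\<Sum>j<M. \<xi> j * \<xi> j) \<le> (\<Sum>j<M. ((\<Sum>l<M. (- Dxx x0 L M j l / 2) * \<xi> l)
      + (V (xgrid x0 L M j) + \<omega> - p * lam * \<bar>us j\<bar> powr (p - 1)) * \<xi> j) * \<xi> j)"
      using assms(1) by (simp add: mult.left_commute)
  qed (rule \<open>0 < c\<close>)
qed

locale pseudospectral_ground_state = gfalm_ground_state M h K Vw p lam \<alpha> c us
  for x0 L :: real and M :: nat and V :: "real \<Rightarrow> real" and \<omega> p lam \<alpha> c :: real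
    and us :: "nat \<Rightarrow> real" and h :: real and K :: "nat \<Rightarrow> nat \<Rightarrow> real" and Vw :: "nat \<Rightarrow> real" +
  assumes hstep_eq: "hstep L M = h"
    and Dxx_eq: "\<And>j l. Dxx x0 L M j l = - 2 * K j l"
    and potential_eq: "\<And>j. V (xgrid x0 L M j) + \<omega> = Vw j"
begin

lemma Dxx_app_eq_Kop: "Dxx_app x0 L M u j = - 2 * Kop u j"
  by (simp add: Dxx_app_def Dxx_eq Kop_def sum_distrib_left mult.assoc)

lemma A_h_eq_Aop: "A_h x0 L M V \<omega> u j = Aop u j"
  by (simp add: A_h_def Dxx_app_eq_Kop op_def flip: potential_eq)

lemma normq_h_eq_qmass: "normq_h L M (p + 1) u = qmass u powr (1 / (p + 1))"
  by (simp add: normq_h_def qmass_def hstep_eq)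

lemma S_h_iff_qmass: "u \<in> S_h L M p \<longleftrightarrow> qmass u = 1"
  using S_h_normalized[of L M p u] h_pos p_gt_1 by (auto simp: qmass_def S_h_def normq_h_def hstep_eq)

lemma lam_tilde_eq_lam_of: "lam_tilde x0 L M V \<omega> p u = lam_of u"
proof -
  have "0 \<le> qmass u"
    using h_pos by (simp add: qmass_def sum_nonneg)
  then have "(qmass u powr (1 / (p + 1))) powr (p + 1) = qmass u"
    using p_gt_1 by (simp add: powr_powr)
  moreover have "Q_h x0 L M V \<omega> u = h * dot (Aop u) u"
    using Q_h_eq_sum[of L M x0 V \<omega> u] h_pos by (simp add: hstep_eq A_h_eq_Aop dot_def)
  ultimately show ?thesis
    by (simp add: lam_tilde_def lam_of_def normq_h_eq_qmass)
qed

lemma GFALM_iter_imp_gfalm_step: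
  assumes "GFALM_iter x0 L M V \<omega> p \<alpha> \<tau> u ut" and "0 < \<tau>"
  shows "gfalm_step \<tau> (u n) (ut (Suc n)) (u (Suc n))"
  unfolding gfalm_step_def
proof (intro allI impI conjI)
  fix j assume "j < M"
  then have iter: "(ut (Suc n) j - u n j) / \<tau> = - (Kop (ut (Suc n)) j
      + (Vw j - lam_of (u n) * \<bar>u n j\<bar> powr (p - 1)) * u n j + \<alpha> * (ut (Suc n) j - u n j))"
    and "u (Suc n) j = ut (Suc n) j / normq_h L M (p + 1) (ut (Suc n))"
    using assms(1) by (simp_all add: GFALM_iter_def lam_tilde_eq_lam_of Dxx_app_eq_Kop potential_eq)
  then show "u (Suc n) j = ut (Suc n) j / qmass (ut (Suc n)) powr (1 / (p + 1))"
    by (simp add: normq_h_eq_qmass)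
  from iter have "(1 / \<tau>) * (u n j - ut (Suc n) j) = Kop (ut (Suc n)) j
      + (Vw j - lam_of (u n) * \<bar>u n j\<bar> powr (p - 1)) * u n j + \<alpha> * (ut (Suc n) j - u n j)"
    using assms(2) by (simp add: field_simps)
  then show "op (\<lambda>_. 1 / \<tau> + \<alpha>) (\<lambda>j. u n j - ut (Suc n) j) j = grad (u n) j"
    by (simp add: op_def Kop_diff grad_def algebra_simps)
qed

lemma norm1_h_sq: "(norm1_h x0 L M u)\<^sup>2 = h * ((enorm u)\<^sup>2 + 2 * dot (Kop u) u)"
proof -
  have "inner_h L M (\<lambda>j. - Dxx_app x0 L M u j) u = 2 * h * dot (Kop u) u"
    by (simp add: inner_h_def Dxx_app_eq_Kop hstep_eq dot_def sum_distrib_left mult_ac)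
  then have "(semi1_h x0 L M u)\<^sup>2 = 2 * h * dot (Kop u) u"
    using h_pos dot_Kop_nonneg[of u] by (simp add: semi1_h_def)
  moreover have "(norm_h L M u)\<^sup>2 = h * (enorm u)\<^sup>2"
    using h_pos by (simp add: norm_h_def inner_h_def hstep_eq dot_self[symmetric] dot_def sum_nonneg)
  ultimately show ?thesis
    using h_pos dot_Kop_nonneg[of u] by (simp add: norm1_h_def algebra_simps)
qed

lemma enorm_le_norm1_h: "sqrt h * enorm u \<le> norm1_h x0 L M u"
proof (rule power2_le_imp_le)
  show "(sqrt h * enorm u)\<^sup>2 \<le> (norm1_h x0 L M u)\<^sup>2"
    using h_pos dot_Kop_nonneg[of u] by (simp add: norm1_h_sq power_mult_distrib)
qed (simp add: norm1_h_def)

lemma norm1_h_le_enorm: "norm1_h x0 L M u \<le> sqrt (h * (1 + 2 * K_bound)) * enorm u"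
proof (rule power2_le_imp_le)
  have "dot (Kop u) u \<le> enorm (Kop u) * enorm u"
    using abs_dot_le[of "Kop u" u] by simp
  also have "\<dots> \<le> K_bound * enorm u * enorm u"
    by (rule mult_right_mono[OF enorm_Kop_le enorm_nonneg])
  finally have "dot (Kop u) u \<le> K_bound * (enorm u)\<^sup>2"
    by (simp add: power2_eq_square mult.assoc)
  then show "(norm1_h x0 L M u)\<^sup>2 \<le> (sqrt (h * (1 + 2 * K_bound)) * enorm u)\<^sup>2"
    using h_pos K_bound_nonneg by (simp add: norm1_h_sq algebra_simps)
qed (use h_pos K_bound_nonneg enorm_nonneg in simp)

lemma gfalm_converges_in_norm1_h:
  "\<exists>\<delta>0>0. \<forall>u0 \<in> U_h x0 L M \<delta>0 us \<inter> S_h L M p. \<exists>C>0. \<exists>a>0. \<forall>\<tau>>0. \<forall>u ut.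
     (\<forall>j<M. u 0 j = u0 j) \<and> GFALM_iter x0 L M V \<omega> p \<alpha> \<tau> u ut \<longrightarrow>
     (\<forall>n. norm1_h x0 L M (\<lambda>j. u n j - us j) \<le> C * exp (- a * real n * \<tau> / (1 + \<tau>)))"
proof -
  obtain \<delta> C a where "0 < \<delta>" "0 < C" "0 < a" and converges:
    "\<forall>\<tau> u ut. 0 < \<tau> \<longrightarrow> qmass (u 0) = 1 \<longrightarrow> deviation (u 0) \<le> \<delta> \<longrightarrow>
      (\<forall>n. gfalm_step \<tau> (u n) (ut (Suc n)) (u (Suc n))) \<longrightarrow>
      (\<forall>n. deviation (u n) \<le> C * exp (- a * real n * \<tau> / (1 + \<tau>)))"
    using gfalm_converges by auto
  define B where "B = sqrt (h * (1 + 2 * K_bound))"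
  have "0 \<le> B"
    using h_pos K_bound_nonneg by (simp add: B_def)
  have "0 < B * C + 1"
    using \<open>0 \<le> B\<close> \<open>0 < C\<close> by (simp add: add_nonneg_pos)
  have "0 < \<delta> * sqrt h"
    using \<open>0 < \<delta>\<close> h_pos by simp
  moreover have "\<exists>C>0. \<exists>a>0. \<forall>\<tau>>0. \<forall>u ut. (\<forall>j<M. u 0 j = u0 j) \<and> GFALM_iter x0 L M V \<omega> p \<alpha> \<tau> u ut \<longrightarrow>
      (\<forall>n. norm1_h x0 L M (\<lambda>j. u n j - us j) \<le> C * exp (- a * real n * \<tau> / (1 + \<tau>)))"
    if "u0 \<in> U_h x0 L M (\<delta> * sqrt h) us \<inter> S_h L M p" for u0
  proof (rule exI[of _ "B * C + 1"], rule conjI[OF \<open>0 < B * C + 1\<close>],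
      rule exI[of _ a], rule conjI[OF \<open>0 < a\<close>], intro allI impI)
    fix \<tau> n and u ut :: "nat \<Rightarrow> nat \<Rightarrow> real"
    assume "0 < \<tau>" and start: "(\<forall>j<M. u 0 j = u0 j) \<and> GFALM_iter x0 L M V \<omega> p \<alpha> \<tau> u ut"
    have "qmass (u 0) = 1"
      using that start qmass_cong[of "u 0" u0] by (simp add: S_h_iff_qmass)
    have "sqrt h * deviation u0 \<le> \<delta> * sqrt h"
      using that enorm_le_norm1_h[of "\<lambda>j. u0 j - us j"] by (simp add: U_h_def deviation_def)
    then have "deviation (u 0) \<le> \<delta>"
      using start h_pos enorm_cong[of "\<lambda>j. u 0 j - us j" "\<lambda>j. u0 j - us j"]
      by (simp add: deviation_def mult.commute)
    have steps: "\<forall>n. gfalm_step \<tau> (u n) (ut (Suc n)) (u (Suc n))"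
      using GFALM_iter_imp_gfalm_step start \<open>0 < \<tau>\<close> by blast
    have "norm1_h x0 L M (\<lambda>j. u n j - us j) \<le> B * deviation (u n)"
      using norm1_h_le_enorm by (simp add: B_def deviation_def)
    also have "\<dots> \<le> B * (C * exp (- a * real n * \<tau> / (1 + \<tau>)))"
    proof (rule mult_left_mono[OF _ \<open>0 \<le> B\<close>])
      show "deviation (u n) \<le> C * exp (- a * real n * \<tau> / (1 + \<tau>))"
        using converges \<open>0 < \<tau>\<close> \<open>qmass (u 0) = 1\<close> \<open>deviation (u 0) \<le> \<delta>\<close> steps by blast
    qed
    also have "\<dots> \<le> (B * C + 1) * exp (- a * real n * \<tau> / (1 + \<tau>))"
      by (simp add: algebra_simps)
    finally show "norm1_h x0 L M (\<lambda>j. u n j - us j) \<le> (B * C + 1) * exp (- a * real n * \<tau> / (1 + \<tau>))" .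
  qed
  ultimately show ?thesis
    by blast
qed

end

lemma pseudospectral_ground_state_exists:
  assumes "0 < L" and "0 < M" and "1 < p"
    and V_nonneg: "\<forall>x\<in>{x0..x0+L}. V x \<ge> 0"
    and A2': "\<omega> > - lam0' x0 L M V"
    and alpha: "\<alpha> \<ge> 1/2 * max 0 (Max ((\<lambda>j. V (xgrid x0 L M j) + \<omega>) ` {..<M})) + 1/2"
    and gs: "discrete_ground_state x0 L M V \<omega> p us lam"
    and nd: "NDh x0 L M V \<omega> p us lam"
  shows "\<exists>c. pseudospectral_ground_state x0 L M V \<omega> p lam \<alpha> c us
    (hstep L M) (\<lambda>j l. - Dxx x0 L M j l / 2) (\<lambda>j. V (xgrid x0 L M j) + \<omega>)"
proof -
  have "0 < hstep L M"
    using assms by (simp add: hstep_pos)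
  have V_grid: "\<And>j. j < M \<Longrightarrow> 0 \<le> V (xgrid x0 L M j)"
    using V_nonneg xgrid_in_domain[OF \<open>0 < L\<close>] by blast
  obtain c where "0 < c" and coercive: "\<forall>\<xi>. (\<Sum>j<M. (\<bar>us j\<bar> powr (p - 1) * us j) * \<xi> j) = 0 \<longrightarrow>
    c * (\<Sum>j<M. \<xi> j * \<xi> j) \<le> (\<Sum>j<M. ((\<Sum>l<M. (- Dxx x0 L M j l / 2) * \<xi> l)
      + (V (xgrid x0 L M j) + \<omega> - p * lam * \<bar>us j\<bar> powr (p - 1)) * \<xi> j) * \<xi> j)"
    using NDh_imp_coercive[OF \<open>0 < hstep L M\<close> nd] by blast
  have "gfalm_ground_state M (hstep L M) (\<lambda>j l. - Dxx x0 L M j l / 2) (\<lambda>j. V (xgrid x0 L M j) + \<omega>)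
    p lam \<alpha> c us"
  proof (unfold_locales)
    show "0 \<le> lam"
      using discrete_ground_state_multiplier_pos[OF \<open>0 < L\<close> \<open>0 < M\<close> \<open>1 < p\<close> V_grid A2' gs] by simp
    show "hstep L M * (\<Sum>j<M. \<bar>us j\<bar> powr (p + 1)) = 1"
      using S_h_normalized[OF \<open>0 < hstep L M\<close> \<open>1 < p\<close>] gs by (simp add: discrete_ground_state_def)
    show "(\<Sum>l<M. - Dxx x0 L M j l / 2 * us l) + (V (xgrid x0 L M j) + \<omega>) * us j
        = lam * (\<bar>us j\<bar> powr (p - 1) * us j)" if "j < M" for j
      using gs that by (simp add: discrete_ground_state_def A_h_eq_sum)
    show "1 \<le> 2 * \<alpha> - (V (xgrid x0 L M j) + \<omega>)" if "j < M" for j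
    proof -
      have "V (xgrid x0 L M j) + \<omega> \<le> (MAX j\<in>{..<M}. V (xgrid x0 L M j) + \<omega>)"
        using that by (intro Max_ge) auto
      then show ?thesis
        using alpha max.cobounded2[of 0 "MAX j\<in>{..<M}. V (xgrid x0 L M j) + \<omega>"] by linarith
    qed
  qed (use assms \<open>0 < hstep L M\<close> \<open>0 < c\<close> coercive Dxx_symmetric neg_half_Dxx_psd in auto)
  then have "pseudospectral_ground_state x0 L M V \<omega> p lam \<alpha> c us
    (hstep L M) (\<lambda>j l. - Dxx x0 L M j l / 2) (\<lambda>j. V (xgrid x0 L M j) + \<omega>)"
    by (intro pseudospectral_ground_state.intro pseudospectral_ground_state_axioms.intro) simp_all
  then show ?thesis ..
qed

theorem mainTheorem17:
  fixes x0 L :: real and M :: nat and V :: "real \<Rightarrow> real"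
    and \<omega> p \<alpha> lam :: real and us :: "nat \<Rightarrow> real"
  assumes L_pos: "L > 0" and M_pos: "M > 0" and M_even: "even M"
    and A1_p: "1 < p"
    and A1_V_nonneg: "\<forall>x\<in>{x0..x0+L}. V x \<ge> 0"
    and A1_V_bdd: "\<exists>B. \<forall>x\<in>{x0..x0+L}. \<bar>V x\<bar> \<le> B"
    and A2': "\<omega> > - lam0' x0 L M V"
    and alpha: "\<alpha> \<ge> 1/2 * max 0 (Max ((\<lambda>j. V (xgrid x0 L M j) + \<omega>) ` {..<M})) + 1/2"
    and gs: "discrete_ground_state x0 L M V \<omega> p us lam"
    and nd: "NDh x0 L M V \<omega> p us lam"
  shows "\<exists>\<delta>0>0. \<forall>u0 \<in> U_h x0 L M \<delta>0 us \<inter> S_h L M p.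
           \<exists>C>0. \<exists>a>0. \<forall>\<tau>>0. \<forall>u ut.
             (\<forall>j<M. u 0 j = u0 j) \<and> GFALM_iter x0 L M V \<omega> p \<alpha> \<tau> u ut \<longrightarrow>
             (\<forall>n. norm1_h x0 L M (\<lambda>j. u n j - us j) \<le> C * exp (- a * real n * \<tau> / (1 + \<tau>)))"
proof -
  obtain c where "pseudospectral_ground_state x0 L M V \<omega> p lam \<alpha> c us
      (hstep L M) (\<lambda>j l. - Dxx x0 L M j l / 2) (\<lambda>j. V (xgrid x0 L M j) + \<omega>)"
    using pseudospectral_ground_state_exists[OF L_pos M_pos A1_p A1_V_nonneg A2' alpha gs nd] by blast
  then interpret pseudospectral_ground_state x0 L M V \<omega> p lam \<alpha> c us
    "hstep L M" "\<lambda>j l. - Dxx x0 L M j l / 2" "\<lambda>j. V (xgrid x0 L M j) + \<omega>" .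
  show ?thesis
    by (rule gfalm_converges_in_norm1_h)
qed

end
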